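(* Let $q_1,\dots,q_5\in\widehat{\mathbb H}$ be five distinct points and let $q'_1,\dots,q'_4\in\widehat{\mathbb H}$ be four distinct points. Assume $R_{\mathbb H}(q_1,q_2,q_3,q_4)=R_{\mathbb H}(q'_1,q'_2,q'_3,q'_4)$ and $\operatorname{Im}Q(q_1,q_2,q_3,q_4)\neq0$ (equivalently, $q_1,q_2,q_3,q_4$ do not lie on a single circle or line). Then the set $$C=\{\pi(\gamma)(q_5):\gamma\in GL(2,\mathbb H),\ \pi(\gamma)(q_n)=q'_n,\ n=1,2,3,4\}\subset\widehat{\mathbb H}$$ is either a circle, a line, or a single point. Moreover, $C$ is a single point if and only if $Q(q_1,q_2,q_3,q_4)$ and $Q(q_1,q_2,q_3,q_5)$ commute.
   Context: $\mathbb H$ denotes the quaternions (identified with $\mathbb R^4$), $\operatorname{Re}q=(q+\bar q)/2$, $\operatorname{Im}q=(q-\bar q)/2$, $|q|=\sqrt{q\bar q}$; $\widehat{\mathbb H}=\mathbb H\cup\{\infty\}$. $GL(2,\mathbb H)$ acts by $\pi(\gamma)(q)=(aq+b)(cq+d)^{-1}$ for $\gamma=\begin{pmatrix}a&b\\c&d\end{pmatrix}$. The cross-ratio of four distinct points is $Q(q_1,q_2,q_3,q_4)=(q_2-q_1)^{-1}(q_4-q_1)(q_4-q_3)^{-1}(q_2-q_3)$ (limits taken if some $q_n=\infty$), and $R_{\mathbb H}(q_1,q_2,q_3,q_4)=(|Q(q_1,q_2,q_3,q_4)|,\operatorname{Re}Q(q_1,q_2,q_3,q_4))\in\mathbb R^2$.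 *)

theory Defs
  imports Complex_Main
begin

datatype quat = Quat (qRe: real) (qI: real) (qJ: real) (qK: real)

lemma quat_eqI: "qRe x = qRe y \<Longrightarrow> qI x = qI y \<Longrightarrow> qJ x = qJ y \<Longrightarrow> qK x = qK y \<Longrightarrow> x = y"
  by (cases x; cases y) auto

lemma quat_eq_iff: "x = y \<longleftrightarrow> qRe x = qRe y \<and> qI x = qI y \<and> qJ x = qJ y \<and> qK x = qK y"
  by (auto intro: quat_eqI)

instantiation quat :: ring_1
begin
definition "0 = Quat 0 0 0 0"
definition "1 = Quat 1 0 0 0"
definition "x + y = Quat (qRe x + qRe y) (qI x + qI y) (qJ x + qJ y) (qK x + qK y)"
definition "x - y = Quat (qRe x - qRe y) (qI x - qI y) (qJ x - qJ y) (qK x - qK y)"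
definition "- x = Quat (- qRe x) (- qI x) (- qJ x) (- qK x)"
definition "x * y = Quat
   (qRe x * qRe y - qI x * qI y - qJ x * qJ y - qK x * qK y)
   (qRe x * qI y + qI x * qRe y + qJ x * qK y - qK x * qJ y)
   (qRe x * qJ y - qI x * qK y + qJ x * qRe y + qK x * qI y)
   (qRe x * qK y + qI x * qJ y - qJ x * qI y + qK x * qRe y)"
instance
  by standard (auto simp: quat_eq_iff zero_quat_def one_quat_def plus_quat_def
      minus_quat_def uminus_quat_def times_quat_def algebra_simps)
end

definition qnormsq :: "quat \<Rightarrow> real" where
  "qnormsq q = (qRe q)\<^sup>2 + (qI q)\<^sup>2 + (qJ q)\<^sup>2 + (qK q)\<^sup>2"

instantiation quat :: division_ring
begin
definition "inverse x = Quat (qRe x / qnormsq x) (- qI x / qnormsq x)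
     (- qJ x / qnormsq x) (- qK x / qnormsq x)"
definition "x div (y::quat) = x * inverse y"
instance
proof
  fix a :: quat assume a: "a \<noteq> 0"
  have n: "qnormsq a \<noteq> 0"
  proof
    assume "qnormsq a = 0"
    hence "qRe a = 0 \<and> qI a = 0 \<and> qJ a = 0 \<and> qK a = 0"
      unfolding qnormsq_def by (smt (verit) power2_less_eq_zero_iff zero_le_power2)
    with a show False by (simp add: quat_eq_iff zero_quat_def)
  qed
  show "inverse a * a = 1" "a * inverse a = 1"
    using n by (simp_all add: quat_eq_iff inverse_quat_def times_quat_def one_quat_def
        field_simps; simp add: qnormsq_def power2_eq_square algebra_simps)+
next
  show "inverse (0::quat) = 0" by (simp add: inverse_quat_def zero_quat_def quat_eq_iff)
next
  fix a b :: quat show "a div b = a * inverse b" by (simp add: divide_quat_def)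
qed
end

definition qcnj :: "quat \<Rightarrow> quat" where
  "qcnj q = Quat (qRe q) (- qI q) (- qJ q) (- qK q)"

definition qabs :: "quat \<Rightarrow> real" where
  "qabs q = sqrt (qnormsq q)"

definition qof_real :: "real \<Rightarrow> quat" where
  "qof_real r = Quat r 0 0 0"

definition qIm :: "quat \<Rightarrow> quat" where
  "qIm q = (q - qcnj q) / 2"

definition qinner :: "quat \<Rightarrow> quat \<Rightarrow> real" where
  "qinner x y = qRe x * qRe y + qI x * qI y + qJ x * qJ y + qK x * qK y"

datatype hquat = Fin quat | Infty

text \<open>A quaternionic 2x2 matrix (a b; c d) is stored as the tuple (a,b,c,d).\<close>
type_synonym qmat = "quat \<times> quat \<times> quat \<times> quat"

definition qmat_mult :: "qmat \<Rightarrow> qmat \<Rightarrow> qmat" where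
  "qmat_mult M N = (case M of (a,b,c,d) \<Rightarrow> case N of (a',b',c',d') \<Rightarrow>
      (a*a' + b*c', a*b' + b*d', c*a' + d*c', c*b' + d*d'))"

definition GL2H :: "qmat set" where
  "GL2H = {M. \<exists>N. qmat_mult M N = (1,0,0,1) \<and> qmat_mult N M = (1,0,0,1)}"

definition mobius :: "qmat \<Rightarrow> hquat \<Rightarrow> hquat" where
  "mobius M z = (case M of (a,b,c,d) \<Rightarrow>
     (case z of
        Fin q \<Rightarrow> (if c*q + d = 0 then Infty else Fin ((a*q + b) * inverse (c*q + d)))
      | Infty \<Rightarrow> (if c = 0 then Infty else Fin (a * inverse c))))"

text \<open>Q(q1,q2,q3,q4) = (q2-q1)^{-1}(q4-q1)(q4-q3)^{-1}(q2-q3) for finite points; if one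
  point is infinity, the limit is taken.  For q2 = infinity the limit is taken along
  real q2.\<close>
fun crossratio :: "hquat \<Rightarrow> hquat \<Rightarrow> hquat \<Rightarrow> hquat \<Rightarrow> quat" where
  "crossratio (Fin q1) (Fin q2) (Fin q3) (Fin q4) =
     inverse (q2 - q1) * (q4 - q1) * inverse (q4 - q3) * (q2 - q3)"
| "crossratio Infty (Fin q2) (Fin q3) (Fin q4) = inverse (q4 - q3) * (q2 - q3)"
| "crossratio (Fin q1) Infty (Fin q3) (Fin q4) = (q4 - q1) * inverse (q4 - q3)"
| "crossratio (Fin q1) (Fin q2) Infty (Fin q4) = inverse (q2 - q1) * (q4 - q1)"
| "crossratio (Fin q1) (Fin q2) (Fin q3) Infty = inverse (q2 - q1) * (q2 - q3)"
| "crossratio _ _ _ _ = undefined"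

definition RH :: "hquat \<Rightarrow> hquat \<Rightarrow> hquat \<Rightarrow> hquat \<Rightarrow> real \<times> real" where
  "RH q1 q2 q3 q4 = (let Q = crossratio q1 q2 q3 q4 in (qabs Q, qRe Q))"

definition is_circle :: "hquat set \<Rightarrow> bool" where
  "is_circle S \<longleftrightarrow> (\<exists>c u v r. r > 0 \<and> qinner u u = 1 \<and> qinner v v = 1 \<and> qinner u v = 0 \<and>
      S = {Fin (c + qof_real (r * cos t) * u + qof_real (r * sin t) * v) | t. True})"

definition is_line :: "hquat set \<Rightarrow> bool" where
  "is_line S \<longleftrightarrow> (\<exists>p u. u \<noteq> 0 \<and> S = insert Infty {Fin (p + qof_real t * u) | t. True})"

end

theory Submission
  imports Defs
begin

text \<open>
  Moebius maps sending \<open>q\<^sub>1, q\<^sub>2, q\<^sub>3\<close> and \<open>q'\<^sub>1, q'\<^sub>2, q'\<^sub>3\<close> to \<open>0, 1, \<infinity>\<close> send \<open>q\<^sub>4, q\<^sub>5, q'\<^sub>4\<close>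
  to the cross-ratios \<open>P = Q(q\<^sub>1, q\<^sub>2, q\<^sub>3, q\<^sub>4)\<close>, \<open>W = Q(q\<^sub>1, q\<^sub>2, q\<^sub>3, q\<^sub>5)\<close> and
  \<open>P' = Q(q'\<^sub>1, q'\<^sub>2, q'\<^sub>3, q'\<^sub>4)\<close>. The maps fixing \<open>0, 1, \<infinity>\<close> are the scalar matrices
  \<open>diag(a, a)\<close>, acting by \<open>x \<mapsto> a x a\<inverse>\<close>, so \<open>C\<close> is the image under one fixed Moebius map of
  \<open>{a W a\<inverse> | a P a\<inverse> = P'}\<close>. Since \<open>P\<close> is not real and has the real part and modulus of \<open>P'\<close>,
  it is conjugate to \<open>P'\<close>, and that set becomes the orbit of \<open>W\<close> under conjugation by the
  centralizer \<open>\<real> + \<real>P\<close> of \<open>P\<close>. Writing \<open>P = p + r I\<close> with \<open>I\<^sup>2 = -1\<close> and \<open>W = \<delta> + X\<close> with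
  \<open>\<delta> \<in> \<real> + \<real>I\<close> and \<open>X \<perp> \<real> + \<real>I\<close>, the orbit is \<open>{W}\<close> if \<open>X = 0\<close>, i.e. if \<open>W\<close> commutes with \<open>P\<close>,
  and otherwise the circle \<open>\<delta> + e\<^sup>I\<^sup>\<theta> X\<close>. Moebius maps send circles to circles or lines:
  after affine normalisation this is the classical computation of the inversion of a circle.
\<close>

lemma quat_zero_sel [simp]: "qRe 0 = 0" "qI 0 = 0" "qJ 0 = 0" "qK 0 = 0"
  by (simp_all add: zero_quat_def)

lemma quat_one_sel [simp]: "qRe 1 = 1" "qI 1 = 0" "qJ 1 = 0" "qK 1 = 0"
  by (simp_all add: one_quat_def)

lemma quat_plus_sel [simp]:
  "qRe (x + y) = qRe x + qRe y" "qI (x + y) = qI x + qI y"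
  "qJ (x + y) = qJ x + qJ y" "qK (x + y) = qK x + qK y"
  by (simp_all add: plus_quat_def)

lemma quat_minus_sel [simp]:
  "qRe (x - y) = qRe x - qRe y" "qI (x - y) = qI x - qI y"
  "qJ (x - y) = qJ x - qJ y" "qK (x - y) = qK x - qK y"
  by (simp_all add: minus_quat_def)

lemma quat_uminus_sel [simp]:
  "qRe (- x) = - qRe x" "qI (- x) = - qI x" "qJ (- x) = - qJ x" "qK (- x) = - qK x"
  by (simp_all add: uminus_quat_def)

lemma quat_times_sel [simp]:
  "qRe (x * y) = qRe x * qRe y - qI x * qI y - qJ x * qJ y - qK x * qK y"
  "qI (x * y) = qRe x * qI y + qI x * qRe y + qJ x * qK y - qK x * qJ y"
  "qJ (x * y) = qRe x * qJ y - qI x * qK y + qJ x * qRe y + qK x * qI y"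
  "qK (x * y) = qRe x * qK y + qI x * qJ y - qJ x * qI y + qK x * qRe y"
  by (simp_all add: times_quat_def)

lemma quat_inverse_sel [simp]:
  "qRe (inverse x) = qRe x / qnormsq x" "qI (inverse x) = - qI x / qnormsq x"
  "qJ (inverse x) = - qJ x / qnormsq x" "qK (inverse x) = - qK x / qnormsq x"
  by (simp_all add: inverse_quat_def)

lemma qof_real_sel [simp]:
  "qRe (qof_real r) = r" "qI (qof_real r) = 0" "qJ (qof_real r) = 0" "qK (qof_real r) = 0"
  by (simp_all add: qof_real_def)

lemma qcnj_sel [simp]:
  "qRe (qcnj x) = qRe x" "qI (qcnj x) = - qI x" "qJ (qcnj x) = - qJ x" "qK (qcnj x) = - qK x"
  by (simp_all add: qcnj_def)

lemma quat_of_nat_sel: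
  "qRe (of_nat m) = of_nat m \<and> qI (of_nat m) = 0 \<and> qJ (of_nat m) = 0 \<and> qK (of_nat m) = 0"
  by (induct m) simp_all

lemma quat_numeral_sel [simp]:
  "qRe (numeral n) = numeral n" "qI (numeral n) = 0" "qJ (numeral n) = 0" "qK (numeral n) = 0"
  using quat_of_nat_sel[of "numeral n"] by (simp_all add: of_nat_numeral)

lemma qnormsq_nonneg: "qnormsq x \<ge> 0"
  by (simp add: qnormsq_def)

lemma qnormsq_eq_0_iff [simp]: "qnormsq x = 0 \<longleftrightarrow> x = 0"
  by (auto simp: qnormsq_def quat_eq_iff add_nonneg_eq_0_iff)

lemma qnormsq_pos: "x \<noteq> 0 \<Longrightarrow> qnormsq x > 0"
  using qnormsq_nonneg[of x] by (simp add: order_less_le)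

lemma qinner_self: "qinner x x = qnormsq x"
  by (simp add: qnormsq_def qinner_def power2_eq_square)

lemma qinner_commute: "qinner x y = qinner y x"
  by (simp add: qinner_def mult.commute)

lemma qinner_mult_left: "qinner (x * y) (x * z) = qnormsq x * qinner y z"
  by (simp add: qnormsq_def qinner_def power2_eq_square) algebra

lemma qinner_mult_right: "qinner (y * x) (z * x) = qnormsq x * qinner y z"
  by (simp add: qnormsq_def qinner_def power2_eq_square) algebra

lemma qinner_scale: "qinner (qof_real a * x) (qof_real b * y) = a * b * qinner x y"
  by (simp add: qinner_def algebra_simps)

lemma qinner_add_right: "qinner x (y + z) = qinner x y + qinner x z"
  by (simp add: qinner_def algebra_simps)

lemma qinner_scale_right: "qinner x (qof_real a * y) = a * qinner x y"
  by (simp add: qinner_def algebra_simps)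

lemma qof_real_0 [simp]: "qof_real 0 = 0" and qof_real_1 [simp]: "qof_real 1 = 1"
  by (simp_all add: quat_eq_iff)

lemma qof_real_uminus: "qof_real (- a) = - qof_real a"
  by (simp add: quat_eq_iff)

lemma qof_real_commute: "qof_real r * x = x * qof_real r"
  by (simp add: quat_eq_iff)

lemma qof_real_mult: "qof_real (a * b) = qof_real a * qof_real b"
  by (simp add: quat_eq_iff)

lemma qof_real_mult_assoc: "qof_real a * (qof_real b * x) = qof_real (a * b) * x"
  by (simp add: quat_eq_iff algebra_simps)

lemma qof_real_left_commute: "y * (qof_real a * x) = qof_real a * (y * x)"
  by (simp add: quat_eq_iff algebra_simps)

lemma qof_real_mult_right: "(qof_real a * x) * y = qof_real a * (x * y)"
  by (simp add: quat_eq_iff algebra_simps)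

lemma quat_mult_inverse_cancel_left:
  "(x::quat) \<noteq> 0 \<Longrightarrow> x * (inverse x * y) = y" "x \<noteq> 0 \<Longrightarrow> inverse x * (x * y) = y"
  by (simp_all add: mult.assoc[symmetric])

lemma conj_cancel:
  fixes b x y :: "'a :: division_ring"
  assumes "b \<noteq> 0"
  shows "b * x * inverse b = b * y * inverse b \<longleftrightarrow> x = y"
proof
  assume "b * x * inverse b = b * y * inverse b"
  then have "inverse b * (b * x * inverse b) * b = inverse b * (b * y * inverse b) * b"
    by simp
  with assms show "x = y"
    by (simp add: mult.assoc)
qed simp

lemma conj_eq_iff_commute:
  fixes a x :: "'a :: division_ring"
  assumes "a \<noteq> 0"
  shows "a * x * inverse a = x \<longleftrightarrow> a * x = x * a"
proof
  assume "a * x * inverse a = x"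
  then have "a * x * inverse a * a = x * a"
    by simp
  with assms show "a * x = x * a"
    by (simp add: mult.assoc)
next
  assume "a * x = x * a"
  with assms show "a * x * inverse a = x"
    by (simp add: mult.assoc)
qed

lemma conj_mult:
  fixes a b x :: "'a :: division_ring"
  assumes "a \<noteq> 0" "b \<noteq> 0"
  shows "(b * a) * x * inverse (b * a) = b * (a * x * inverse a) * inverse b"
  using assms by (simp add: nonzero_inverse_mult_distrib mult.assoc)

lemma quat_two_nonzero: "(2::quat) \<noteq> 0"
  by (simp add: quat_eq_iff)

lemma qIm_eq: "qIm q = Quat 0 (qI q) (qJ q) (qK q)"
proof -
  have "q - qcnj q = Quat 0 (qI q) (qJ q) (qK q) * 2"
    by (simp add: quat_eq_iff)
  then show ?thesis
    by (simp add: qIm_def mult.assoc quat_two_nonzero)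
qed

lemma qIm_nonzero_iff: "qIm q \<noteq> 0 \<longleftrightarrow> qI q \<noteq> 0 \<or> qJ q \<noteq> 0 \<or> qK q \<noteq> 0"
  by (auto simp: qIm_eq quat_eq_iff)

section \<open>The action of \<open>GL(2,H)\<close>\<close>

abbreviation qmat_id :: qmat where "qmat_id \<equiv> (1, 0, 0, 1)"

lemma qmat_mult_simp:
  "qmat_mult (a, b, c, d) (a', b', c', d') = (a*a' + b*c', a*b' + b*d', c*a' + d*c', c*b' + d*d')"
  by (simp add: qmat_mult_def)

lemma qmat_mult_assoc: "qmat_mult (qmat_mult A B) C = qmat_mult A (qmat_mult B C)"
  by (cases A; cases B; cases C) (simp add: qmat_mult_simp algebra_simps)

lemma qmat_mult_id [simp]: "qmat_mult qmat_id A = A" "qmat_mult A qmat_id = A"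
  by (cases A; simp add: qmat_mult_simp)+

lemma GL2H_mult:
  assumes "M \<in> GL2H" "N \<in> GL2H"
  shows "qmat_mult M N \<in> GL2H"
proof -
  obtain M' N' where "qmat_mult M M' = qmat_id" "qmat_mult M' M = qmat_id"
    "qmat_mult N N' = qmat_id" "qmat_mult N' N = qmat_id"
    using assms unfolding GL2H_def by blast
  then have "qmat_mult (qmat_mult M N) (qmat_mult N' M') = qmat_id"
    "qmat_mult (qmat_mult N' M') (qmat_mult M N) = qmat_id"
    by (simp_all add: qmat_mult_assoc, simp_all flip: qmat_mult_assoc)
  then show ?thesis
    unfolding GL2H_def by blast
qed

lemma GL2H_kernel:
  assumes "(a, b, c, d) \<in> GL2H" "a*x + b*y = 0" "c*x + d*y = 0"
  shows "x = 0 \<and> y = 0"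
proof -
  obtain e f g h where "qmat_mult (e, f, g, h) (a, b, c, d) = qmat_id"
    using assms(1) unfolding GL2H_def by auto
  then have inv: "e*a + f*c = 1" "e*b + f*d = 0" "g*a + h*c = 0" "g*b + h*d = 1"
    by (simp_all add: qmat_mult_simp)
  have "x = (e*a + f*c)*x + (e*b + f*d)*y" "y = (g*a + h*c)*x + (g*b + h*d)*y"
    using inv by simp_all
  then have "x = e*(a*x + b*y) + f*(c*x + d*y)" "y = g*(a*x + b*y) + h*(c*x + d*y)"
    by (simp_all add: algebra_simps)
  with assms(2,3) show ?thesis
    by (metis add.right_neutral mult_zero_right)
qed

text \<open>Homogeneous coordinates: \<open>[x : y]\<close> stands for \<open>x y\<inverse>\<close>, and \<open>\<gamma>\<close> acts linearly on
  column vectors.\<close>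

definition qmat_apply :: "qmat \<Rightarrow> quat \<times> quat \<Rightarrow> quat \<times> quat" where
  "qmat_apply M v = (case M of (a, b, c, d) \<Rightarrow> case v of (x, y) \<Rightarrow> (a*x + b*y, c*x + d*y))"

definition point_of_coords :: "quat \<times> quat \<Rightarrow> hquat" where
  "point_of_coords v = (case v of (x, y) \<Rightarrow> if y = 0 then Infty else Fin (x * inverse y))"

fun coords_of_point :: "hquat \<Rightarrow> quat \<times> quat" where
  "coords_of_point (Fin q) = (q, 1)"
| "coords_of_point Infty = (1, 0)"

definition coords_scale :: "quat \<times> quat \<Rightarrow> quat \<Rightarrow> quat \<times> quat" where
  "coords_scale v s = (fst v * s, snd v * s)"

lemma mobius_eq_point_of_coords: "mobius M z = point_of_coords (qmat_apply M (coords_of_point z))"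
  by (cases M; cases z) (simp_all add: mobius_def qmat_apply_def point_of_coords_def)

lemma point_of_coords_scale:
  assumes "s \<noteq> 0"
  shows "point_of_coords (coords_scale v s) = point_of_coords v"
  using assms by (cases v) (simp add: point_of_coords_def coords_scale_def
      nonzero_inverse_mult_distrib mult.assoc quat_mult_inverse_cancel_left)

lemma coords_of_point_of_coords:
  assumes "v \<noteq> (0, 0)"
  obtains s where "s \<noteq> 0" "v = coords_scale (coords_of_point (point_of_coords v)) s"
proof (cases v)
  case (Pair x y)
  show ?thesis
  proof (cases "y = 0")
    case True
    with assms Pair show ?thesis
      by (intro that[of x]) (simp_all add: point_of_coords_def coords_scale_def)
  next
    case False
    with Pair show ?thesis
      by (intro that[of y]) (simp_all add: point_of_coords_def coords_scale_def mult.assoc)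
  qed
qed

lemma qmat_apply_scale: "qmat_apply M (coords_scale v s) = coords_scale (qmat_apply M v) s"
  by (cases M; cases v) (simp add: qmat_apply_def coords_scale_def algebra_simps)

lemma qmat_apply_mult: "qmat_apply (qmat_mult M N) v = qmat_apply M (qmat_apply N v)"
  by (cases M; cases N; cases v) (simp add: qmat_apply_def qmat_mult_simp algebra_simps)

lemma qmat_apply_coords_nonzero:
  assumes "N \<in> GL2H"
  shows "qmat_apply N (coords_of_point z) \<noteq> (0, 0)"
proof -
  obtain a b c d where N: "N = (a, b, c, d)"
    by (cases N) auto
  obtain x y where xy: "coords_of_point z = (x, y)"
    by (cases "coords_of_point z") auto
  have nonzero: "(x, y) \<noteq> (0, 0)"
    using xy by (cases z) auto
  show ?thesis
  proof
    assume "qmat_apply N (coords_of_point z) = (0, 0)"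
    then have "a*x + b*y = 0" "c*x + d*y = 0"
      by (simp_all add: N xy qmat_apply_def)
    then have "x = 0 \<and> y = 0"
      using GL2H_kernel assms N by blast
    with nonzero show False
      by simp
  qed
qed

lemma mobius_qmat_mult:
  assumes "N \<in> GL2H"
  shows "mobius (qmat_mult M N) z = mobius M (mobius N z)"
proof -
  obtain s where s: "s \<noteq> 0"
    and v: "qmat_apply N (coords_of_point z) = coords_scale (coords_of_point (mobius N z)) s"
    using coords_of_point_of_coords[OF qmat_apply_coords_nonzero[OF assms]]
    unfolding mobius_eq_point_of_coords by metis
  show ?thesis
    unfolding mobius_eq_point_of_coords[of "qmat_mult M N"] qmat_apply_mult v qmat_apply_scale
    by (simp add: point_of_coords_scale[OF s] mobius_eq_point_of_coords)
qed

lemma mobius_id [simp]: "mobius qmat_id z = z"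
  by (cases z) (simp_all add: mobius_def)

lemma mobius_inverse:
  assumes "M \<in> GL2H"
  obtains N where "N \<in> GL2H" "\<And>z. mobius N (mobius M z) = z" "\<And>z. mobius M (mobius N z) = z"
proof -
  obtain N where NM: "qmat_mult N M = qmat_id" and MN: "qmat_mult M N = qmat_id"
    using assms unfolding GL2H_def by blast
  then have N: "N \<in> GL2H"
    unfolding GL2H_def by blast
  show ?thesis
  proof (rule that[OF N])
    fix z
    show "mobius N (mobius M z) = z"
      using mobius_qmat_mult[OF assms, of N z] by (simp add: NM)
    show "mobius M (mobius N z) = z"
      using mobius_qmat_mult[OF N, of M z] by (simp add: MN)
  qed
qed

lemma mobius_inj: "M \<in> GL2H \<Longrightarrow> mobius M z = mobius M w \<Longrightarrow> z = w"
  by (metis mobius_inverse)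

lemma GL2H_upper_triangular:
  assumes "a \<noteq> 0" "d \<noteq> 0"
  shows "(a, b, 0, d) \<in> GL2H"
proof -
  let ?N = "(inverse a, - inverse a * b * inverse d, 0, inverse d)"
  have "qmat_mult (a, b, 0, d) ?N = qmat_id"
    using assms by (simp add: qmat_mult_simp mult.assoc[symmetric])
  moreover have "qmat_mult ?N (a, b, 0, d) = qmat_id"
    using assms by (simp add: qmat_mult_simp mult.assoc)
  ultimately show ?thesis
    unfolding GL2H_def by blast
qed

lemma GL2H_lower_triangular:
  assumes "a \<noteq> 0" "d \<noteq> 0"
  shows "(a, 0, c, d) \<in> GL2H"
proof -
  let ?N = "(inverse a, 0, - inverse d * c * inverse a, inverse d)"
  have "qmat_mult (a, 0, c, d) ?N = qmat_id"
    using assms by (simp add: qmat_mult_simp mult.assoc[symmetric])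
  moreover have "qmat_mult ?N (a, 0, c, d) = qmat_id"
    using assms by (simp add: qmat_mult_simp mult.assoc)
  ultimately show ?thesis
    unfolding GL2H_def by blast
qed

lemma GL2H_antidiagonal: "(0, 1, 1, 0) \<in> GL2H"
  unfolding GL2H_def by (rule CollectI, rule exI[of _ "(0, 1, 1, 0)"]) (simp add: qmat_mult_simp)

text \<open>For \<open>c \<noteq> 0\<close>, the quaternionic substitute for the determinant is \<open>b - a c\<inverse> d\<close>.\<close>

lemma GL2H_of_lower_left_nonzero:
  assumes "c \<noteq> 0" "b - a * inverse c * d \<noteq> 0"
  shows "(a, b, c, d) \<in> GL2H"
proof -
  have "qmat_mult (1, a * inverse c, 0, 1)
      (qmat_mult (b - a * inverse c * d, 0, d, c) (0, 1, 1, 0)) \<in> GL2H"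
    using assms by (intro GL2H_mult GL2H_upper_triangular GL2H_lower_triangular GL2H_antidiagonal) simp_all
  moreover have "qmat_mult (1, a * inverse c, 0, 1)
      (qmat_mult (b - a * inverse c * d, 0, d, c) (0, 1, 1, 0)) = (a, b, c, d)"
    using assms by (simp add: qmat_mult_simp mult.assoc)
  ultimately show ?thesis
    by simp
qed

lemma GL2H_upper_triangular_diag_nonzero:
  assumes "(a, b, 0, d) \<in> GL2H"
  shows "a \<noteq> 0" "d \<noteq> 0"
proof -
  show "a \<noteq> 0"
    using GL2H_kernel[OF assms, of 1 0] by auto
  obtain N where "qmat_mult (a, b, 0, d) N = qmat_id"
    using assms unfolding GL2H_def by auto
  then show "d \<noteq> 0"
    by (cases N) (auto simp: qmat_mult_simp)
qed

lemma GL2H_lower_left_nonzero_schur: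
  assumes "(a, b, c, d) \<in> GL2H" "c \<noteq> 0"
  shows "b - a * inverse c * d \<noteq> 0"
proof
  assume "b - a * inverse c * d = 0"
  then have "a * (- (inverse c * d)) + b * 1 = 0"
    by (simp add: algebra_simps mult.assoc)
  moreover have "c * (- (inverse c * d)) + d * 1 = 0"
    using assms(2) by (simp add: mult.assoc[symmetric])
  ultimately show False
    using GL2H_kernel[OF assms(1), of "- (inverse c * d)" 1] by simp
qed

definition normalizes :: "qmat \<Rightarrow> hquat \<Rightarrow> hquat \<Rightarrow> hquat \<Rightarrow> bool" where
  "normalizes N z1 z2 z3 \<longleftrightarrow> N \<in> GL2H \<and>
     mobius N z1 = Fin 0 \<and> mobius N z2 = Fin 1 \<and> mobius N z3 = Infty \<and>
     (\<forall>z. z \<notin> {z1, z2, z3} \<longrightarrow> mobius N z = Fin (crossratio z1 z2 z3 z))"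

lemma mobius_difference_quotient:
  assumes "A \<noteq> 0" "B \<noteq> 0"
  shows "mobius (inverse A, - inverse A * u, inverse B, - inverse B * v) (Fin q) =
    (if q = v then Infty else Fin (inverse A * (q - u) * inverse (q - v) * B))"
proof -
  have "inverse A * q - inverse A * u = inverse A * (q - u)"
    "inverse B * q - inverse B * v = inverse B * (q - v)"
    by (simp_all add: algebra_simps)
  with assms show ?thesis
    by (simp add: mobius_def nonzero_inverse_mult_distrib mult.assoc)
qed

lemma normalizes_Fin_Fin_Fin:
  assumes "x1 \<noteq> x2" "x1 \<noteq> x3" "x2 \<noteq> x3"
  shows "\<exists>N. normalizes N (Fin x1) (Fin x2) (Fin x3)"
proof -
  define \<alpha> \<beta> where "\<alpha> = x2 - x1" and "\<beta> = x2 - x3"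
  have nonzero: "\<alpha> \<noteq> 0" "\<beta> \<noteq> 0" "x3 - x1 \<noteq> 0"
    using assms by (simp_all add: \<alpha>_def \<beta>_def)
  define N :: qmat where "N = (inverse \<alpha>, - inverse \<alpha> * x1, inverse \<beta>, - inverse \<beta> * x3)"
  have "- inverse \<alpha> * x1 - inverse \<alpha> * inverse (inverse \<beta>) * (- inverse \<beta> * x3) = inverse \<alpha> * (x3 - x1)"
    using nonzero by (simp add: algebra_simps quat_mult_inverse_cancel_left)
  then have "N \<in> GL2H"
    unfolding N_def using nonzero by (intro GL2H_of_lower_left_nonzero) simp_all
  have Fin: "mobius N (Fin q) = (if q = x3 then Infty else Fin (inverse \<alpha> * (q - x1) * inverse (q - x3) * \<beta>))" for q
    unfolding N_def by (rule mobius_difference_quotient[OF nonzero(1,2)])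
  have Infty: "mobius N Infty = Fin (inverse \<alpha> * \<beta>)"
    using nonzero by (simp add: N_def mobius_def)
  have "mobius N z = Fin (crossratio (Fin x1) (Fin x2) (Fin x3) z)" if "z \<notin> {Fin x1, Fin x2, Fin x3}" for z
    using that Fin Infty by (cases z) (simp_all add: mult.assoc \<alpha>_def \<beta>_def)
  with \<open>N \<in> GL2H\<close> Fin have "normalizes N (Fin x1) (Fin x2) (Fin x3)"
    using assms nonzero unfolding normalizes_def
    by (simp add: mult.assoc quat_mult_inverse_cancel_left flip: \<alpha>_def \<beta>_def)
  then show ?thesis ..
qed

lemma normalizes_Fin_Fin_Infty:
  assumes "x1 \<noteq> x2"
  shows "\<exists>N. normalizes N (Fin x1) (Fin x2) Infty"
proof -
  define N :: qmat where "N = (inverse (x2 - x1), - inverse (x2 - x1) * x1, 0, 1)"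
  have "N \<in> GL2H"
    unfolding N_def using assms by (intro GL2H_upper_triangular) simp_all
  have Fin: "mobius N (Fin q) = Fin (inverse (x2 - x1) * (q - x1))" for q
    by (simp add: N_def mobius_def algebra_simps)
  have Infty: "mobius N Infty = Infty"
    by (simp add: N_def mobius_def)
  have "mobius N z = Fin (crossratio (Fin x1) (Fin x2) Infty z)" if "z \<notin> {Fin x1, Fin x2, Infty}" for z
    using that Fin Infty by (cases z) simp_all
  with \<open>N \<in> GL2H\<close> Fin Infty have "normalizes N (Fin x1) (Fin x2) Infty"
    using assms unfolding normalizes_def by auto
  then show ?thesis ..
qed

lemma normalizes_Fin_Infty_Fin:
  assumes "x1 \<noteq> x3"
  shows "\<exists>N. normalizes N (Fin x1) Infty (Fin x3)"
proof -
  define N :: qmat where "N = (1, - x1, 1, - x3)"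
  have "N \<in> GL2H"
    unfolding N_def using assms by (intro GL2H_of_lower_left_nonzero) simp_all
  have Fin: "mobius N (Fin q) = (if q = x3 then Infty else Fin ((q - x1) * inverse (q - x3)))" for q
    using mobius_difference_quotient[of 1 1 x1 x3 q] by (simp add: N_def)
  have Infty: "mobius N Infty = Fin 1"
    by (simp add: N_def mobius_def)
  have "mobius N z = Fin (crossratio (Fin x1) Infty (Fin x3) z)" if "z \<notin> {Fin x1, Infty, Fin x3}" for z
    using that Fin Infty by (cases z) simp_all
  with \<open>N \<in> GL2H\<close> Fin Infty have "normalizes N (Fin x1) Infty (Fin x3)"
    using assms unfolding normalizes_def by auto
  then show ?thesis ..
qed

lemma normalizes_Infty_Fin_Fin:
  assumes "x2 \<noteq> x3"
  shows "\<exists>N. normalizes N Infty (Fin x2) (Fin x3)"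
proof -
  define \<beta> where "\<beta> = x2 - x3"
  have nonzero: "\<beta> \<noteq> 0"
    using assms by (simp add: \<beta>_def)
  define N :: qmat where "N = (0, 1, inverse \<beta>, - inverse \<beta> * x3)"
  have "N \<in> GL2H"
    unfolding N_def using nonzero by (intro GL2H_of_lower_left_nonzero) simp_all
  have Fin: "mobius N (Fin q) = (if q = x3 then Infty else Fin (inverse (q - x3) * \<beta>))" for q
  proof -
    have "inverse \<beta> * q - inverse \<beta> * x3 = inverse \<beta> * (q - x3)"
      by (simp add: algebra_simps)
    with nonzero show ?thesis
      by (simp add: N_def mobius_def nonzero_inverse_mult_distrib)
  qed
  have Infty: "mobius N Infty = Fin 0"
    using nonzero by (simp add: N_def mobius_def)
  have "mobius N z = Fin (crossratio Infty (Fin x2) (Fin x3) z)" if "z \<notin> {Infty, Fin x2, Fin x3}" for z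
    using that Fin Infty by (cases z) (simp_all add: \<beta>_def)
  with \<open>N \<in> GL2H\<close> Fin Infty have "normalizes N Infty (Fin x2) (Fin x3)"
    using assms nonzero unfolding normalizes_def by (auto simp: \<beta>_def)
  then show ?thesis ..
qed

lemma normalizes_exists:
  assumes "z1 \<noteq> z2" "z1 \<noteq> z3" "z2 \<noteq> z3"
  shows "\<exists>N. normalizes N z1 z2 z3"
  using assms normalizes_Fin_Fin_Fin normalizes_Fin_Fin_Infty normalizes_Fin_Infty_Fin
    normalizes_Infty_Fin_Fin
  by (cases z1; cases z2; cases z3) auto

lemma GL2H_scalar: "a \<noteq> 0 \<Longrightarrow> (a, 0, 0, a) \<in> GL2H"
  by (rule GL2H_upper_triangular)

lemma mobius_scalar:
  "a \<noteq> 0 \<Longrightarrow> mobius (a, 0, 0, a) (Fin q) = Fin (a * q * inverse a)"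
  "mobius (a, 0, 0, a) Infty = Infty"
  by (simp_all add: mobius_def)

lemma GL2H_fixing_0_1_Infty:
  assumes "M \<in> GL2H" "mobius M (Fin 0) = Fin 0" "mobius M (Fin 1) = Fin 1" "mobius M Infty = Infty"
  obtains a where "a \<noteq> 0" "M = (a, 0, 0, a)"
proof -
  obtain a b c d where M: "M = (a, b, c, d)"
    by (cases M) auto
  have c: "c = 0"
    using assms(4) by (simp add: M mobius_def split: if_splits)
  then have ad: "a \<noteq> 0" "d \<noteq> 0"
    using GL2H_upper_triangular_diag_nonzero assms(1) M by blast+
  then have b: "b = 0"
    using assms(2) by (simp add: M mobius_def c)
  have "a * inverse d = 1"
    using assms(3) ad by (simp add: M mobius_def c b)
  then have "a = d"
    using ad by (metis mult.assoc mult_1_left left_inverse mult_1_right)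
  with M b c ad show ?thesis
    using that by blast
qed

section \<open>Conjugacy and centralizers in \<open>H\<close>\<close>

definition unit_imaginary :: "quat \<Rightarrow> bool" where
  "unit_imaginary I \<longleftrightarrow> qRe I = 0 \<and> qnormsq I = 1"

lemma unit_imaginary_square:
  assumes "unit_imaginary I"
  shows "I * I = -1"
proof -
  have "qRe I = 0" "qI I * qI I + qJ I * qJ I + qK I * qK I = 1"
    using assms by (auto simp: unit_imaginary_def qnormsq_def power2_eq_square)
  then show ?thesis
    by (simp add: quat_eq_iff)
qed

lemma unit_imaginary_nonzero: "unit_imaginary I \<Longrightarrow> I \<noteq> 0"
  by (auto simp: unit_imaginary_def qnormsq_def)

lemma unit_imaginary_qIm_nonzero:
  assumes "unit_imaginary I"
  shows "qIm I \<noteq> 0"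
  using assms by (auto simp: unit_imaginary_def qnormsq_def qIm_nonzero_iff)

lemma pure_quat_square: "qRe v = 0 \<Longrightarrow> v * v = qof_real (- qnormsq v)"
  by (simp add: quat_eq_iff qnormsq_def power2_eq_square)

text \<open>If the imaginary parts \<open>v, v'\<close> are not opposite, \<open>v + v'\<close> conjugates one into the other
  because \<open>v\<^sup>2 = v'\<^sup>2\<close>; otherwise any imaginary unit orthogonal to \<open>v\<close> does.\<close>

lemma quat_conjugate_of_same_Re_norm:
  assumes Re: "qRe P = qRe P'" and norm: "qnormsq P = qnormsq P'"
  obtains b where "b \<noteq> 0" "b * P = P' * b"
proof (cases "qI P' = - qI P \<and> qJ P' = - qJ P \<and> qK P' = - qK P")
  case False
  define r v v' where "r = qof_real (qRe P)" and "v = P - r" and "v' = P' - r"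
  have "- (qI P)\<^sup>2 - (qJ P)\<^sup>2 - (qK P)\<^sup>2 = - (qI P')\<^sup>2 - (qJ P')\<^sup>2 - (qK P')\<^sup>2"
    using norm Re by (simp add: qnormsq_def)
  then have "v * v = v' * v'"
    using pure_quat_square[of v] pure_quat_square[of v'] Re
    by (simp add: v_def v'_def r_def qnormsq_def)
  moreover have "r * x = x * r" for x
    unfolding r_def by (rule qof_real_commute)
  moreover have "P = r + v" "P' = r + v'"
    by (simp_all add: v_def v'_def)
  ultimately have "(v + v') * P = P' * (v + v')"
    by (simp add: algebra_simps)
  moreover have "v + v' \<noteq> 0"
    using False Re by (auto simp: v_def v'_def r_def quat_eq_iff)
  ultimately show ?thesis
    using that by blast
next
  case True
  show ?thesis
  proof (cases "qI P = 0 \<and> qJ P = 0")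
    case True2: True
    show ?thesis
      using True True2 Re by (intro that[of "Quat 0 1 0 0"]) (simp_all add: quat_eq_iff)
  next
    case False
    have "Quat 0 (- qJ P) (qI P) 0 \<noteq> 0"
      using False by (auto simp: quat_eq_iff)
    moreover have "Quat 0 (- qJ P) (qI P) 0 * P = P' * Quat 0 (- qJ P) (qI P) 0"
      using True Re by (simp add: quat_eq_iff algebra_simps)
    ultimately show ?thesis
      using that by blast
  qed
qed

lemma quat_centralizer:
  assumes comm: "a * P = P * a" and Im: "qIm P \<noteq> 0"
  obtains x y where "a = qof_real x + qof_real y * P"
proof -
  define n where "n = qI P ^ 2 + qJ P ^ 2 + qK P ^ 2"
  have "n > 0"
    using Im unfolding n_def qIm_nonzero_iff by (auto simp: add_pos_nonneg add_nonneg_pos)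
  define S where "S = qI a * qI P + qJ a * qJ P + qK a * qK P"
  have c: "qJ a * qK P = qK a * qJ P" "qK a * qI P = qI a * qK P" "qI a * qJ P = qJ a * qI P"
    using comm by (simp_all add: quat_eq_iff) (simp_all add: algebra_simps)
  have "n * qI a - S * qI P = qJ P * (qI a * qJ P - qJ a * qI P) + qK P * (qI a * qK P - qK a * qI P)"
    "n * qJ a - S * qJ P = qI P * (qJ a * qI P - qI a * qJ P) + qK P * (qJ a * qK P - qK a * qJ P)"
    "n * qK a - S * qK P = qI P * (qK a * qI P - qI a * qK P) + qJ P * (qK a * qJ P - qJ a * qK P)"
    unfolding n_def S_def by (simp_all add: power2_eq_square algebra_simps)
  then have "n * qI a = S * qI P" "n * qJ a = S * qJ P" "n * qK a = S * qK P"
    using c by simp_all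
  then have "qI a = S / n * qI P" "qJ a = S / n * qJ P" "qK a = S / n * qK P"
    using \<open>n > 0\<close> by (simp_all add: field_simps)
  then have "a = qof_real (qRe a - S / n * qRe P) + qof_real (S / n) * P"
    by (simp add: quat_eq_iff)
  then show ?thesis
    using that by blast
qed

lemma circle_param_eq_sum_of_squares:
  assumes "r > 0"
  shows "{Fin (c + qof_real (r * cos t) * u + qof_real (r * sin t) * v) | t. True} =
    {Fin (c + qof_real \<alpha> * u + qof_real \<beta> * v) | \<alpha> \<beta>. \<alpha>\<^sup>2 + \<beta>\<^sup>2 = r\<^sup>2}"
proof (intro set_eqI iffI)
  fix z assume "z \<in> {Fin (c + qof_real (r * cos t) * u + qof_real (r * sin t) * v) | t. True}"
  moreover have "(r * cos t)\<^sup>2 + (r * sin t)\<^sup>2 = r\<^sup>2" for t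
    unfolding power_mult_distrib distrib_left[symmetric] by simp
  ultimately show "z \<in> {Fin (c + qof_real \<alpha> * u + qof_real \<beta> * v) | \<alpha> \<beta>. \<alpha>\<^sup>2 + \<beta>\<^sup>2 = r\<^sup>2}"
    by blast
next
  fix z assume "z \<in> {Fin (c + qof_real \<alpha> * u + qof_real \<beta> * v) | \<alpha> \<beta>. \<alpha>\<^sup>2 + \<beta>\<^sup>2 = r\<^sup>2}"
  then obtain \<alpha> \<beta> where z: "z = Fin (c + qof_real \<alpha> * u + qof_real \<beta> * v)" and "\<alpha>\<^sup>2 + \<beta>\<^sup>2 = r\<^sup>2"
    by blast
  then have "(\<alpha> / r)\<^sup>2 + (\<beta> / r)\<^sup>2 = 1"
    using assms by (simp add: power_divide field_simps)
  then obtain t where "\<alpha> / r = cos t" "\<beta> / r = sin t"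
    by (rule sincos_total_2pi)
  then have "\<alpha> = r * cos t" "\<beta> = r * sin t"
    using assms by (simp_all add: field_simps)
  with z show "z \<in> {Fin (c + qof_real (r * cos t) * u + qof_real (r * sin t) * v) | t. True}"
    by blast
qed

lemma is_circleI:
  assumes "r > 0" "qinner u u = 1" "qinner v v = 1" "qinner u v = 0"
    and "S = {Fin (c + qof_real \<alpha> * u + qof_real \<beta> * v) | \<alpha> \<beta>. \<alpha>\<^sup>2 + \<beta>\<^sup>2 = r\<^sup>2}"
  shows "is_circle S"
proof -
  have "S = {Fin (c + qof_real (r * cos t) * u + qof_real (r * sin t) * v) | t. True}"
    unfolding assms(5) circle_param_eq_sum_of_squares[OF assms(1)] ..
  then show ?thesis
    unfolding is_circle_def using assms(1-4) by blast
qed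

lemma SetCompr_True_eq_range: "{f t | t. True} = range f"
  by auto

definition affine_map :: "quat \<Rightarrow> quat \<Rightarrow> quat \<Rightarrow> hquat \<Rightarrow> hquat" where
  "affine_map A B C z = (case z of Fin x \<Rightarrow> Fin (A * x * B + C) | Infty \<Rightarrow> Infty)"

lemma mobius_upper_triangular:
  "d \<noteq> 0 \<Longrightarrow> mobius (a, b, 0, d) z = affine_map a (inverse d) (b * inverse d) z"
  by (cases z) (simp_all add: mobius_def affine_map_def algebra_simps)

lemma affine_scale_commute: "A * (qof_real s * x) * B = qof_real s * (A * x * B)"
  by (simp only: qof_real_left_commute qof_real_mult_right)

text \<open>\<open>x \<mapsto> A x B\<close> scales all distances by \<open>|A| |B|\<close>, so it maps orthonormal pairs to
  orthonormal pairs after rescaling by \<open>k = |A| |B|\<close>.\<close>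

lemma is_circle_affine_image:
  assumes S: "is_circle S" and A: "A \<noteq> 0" and B: "B \<noteq> 0"
  shows "is_circle (affine_map A B C ` S)"
proof -
  obtain c u v r where r: "r > 0" and uv: "qinner u u = 1" "qinner v v = 1" "qinner u v = 0"
    and S_eq: "S = {Fin (c + qof_real (r * cos t) * u + qof_real (r * sin t) * v) | t. True}"
    using S unfolding is_circle_def by blast
  define k where "k = sqrt (qnormsq A * qnormsq B)"
  have k: "k > 0" "k\<^sup>2 = qnormsq A * qnormsq B"
    unfolding k_def using A B qnormsq_pos qnormsq_nonneg by (simp_all add: mult_nonneg_nonneg)
  define u' v' where "u' = qof_real (1 / k) * (A * u * B)" and "v' = qof_real (1 / k) * (A * v * B)"
  have "qinner (A * x * B) (A * y * B) = k\<^sup>2 * qinner x y" for x y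
    by (simp add: qinner_mult_right qinner_mult_left k(2))
  then have uv': "qinner u' u' = 1" "qinner v' v' = 1" "qinner u' v' = 0"
    unfolding u'_def v'_def qinner_scale using uv k(1) by (simp_all add: power2_eq_square)
  have scale: "qof_real (r * f) * X = qof_real ((r * k) * f) * (qof_real (1 / k) * X)" for f X
    using k(1) by (simp add: qof_real_mult_assoc)
  have "A * (c + qof_real (r * cos t) * u + qof_real (r * sin t) * v) * B + C =
      (A * c * B + C) + A * (qof_real (r * cos t) * u) * B + A * (qof_real (r * sin t) * v) * B" for t
    by (simp add: distrib_left distrib_right)
  also have "\<dots> t = (A * c * B + C) + qof_real ((r * k) * cos t) * u' + qof_real ((r * k) * sin t) * v'" for t
    unfolding u'_def v'_def by (simp only: affine_scale_commute scale)
  finally have image: "A * (c + qof_real (r * cos t) * u + qof_real (r * sin t) * v) * B + C =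
      (A * c * B + C) + qof_real ((r * k) * cos t) * u' + qof_real ((r * k) * sin t) * v'" for t .
  have image_eq: "affine_map A B C ` S =
      {Fin ((A * c * B + C) + qof_real ((r * k) * cos t) * u' + qof_real ((r * k) * sin t) * v') | t. True}"
    unfolding S_eq SetCompr_True_eq_range image_image by (simp add: affine_map_def image)
  show ?thesis
    unfolding is_circle_def
    by (rule exI[of _ "A * c * B + C"], rule exI[of _ u'], rule exI[of _ v'], rule exI[of _ "r * k"])
      (use image_eq uv' r k(1) in simp)
qed

lemma is_line_affine_image:
  assumes S: "is_line S" and A: "A \<noteq> 0" and B: "B \<noteq> 0"
  shows "is_line (affine_map A B C ` S)"
proof -
  obtain p u where u: "u \<noteq> 0" and S_eq: "S = insert Infty {Fin (p + qof_real t * u) | t. True}"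
    using S unfolding is_line_def by blast
  have "A * (p + qof_real t * u) * B + C = (A * p * B + C) + qof_real t * (A * u * B)" for t
    by (simp add: distrib_left distrib_right affine_scale_commute)
  then have "affine_map A B C ` S = insert Infty {Fin ((A * p * B + C) + qof_real t * (A * u * B)) | t. True}"
    unfolding S_eq SetCompr_True_eq_range image_insert image_image by (simp add: affine_map_def add_ac)
  moreover have "A * u * B \<noteq> 0"
    using A B u by simp
  ultimately show ?thesis
    unfolding is_line_def by blast
qed

lemma circle_or_line_affine_image:
  assumes "is_circle S \<or> is_line S" "A \<noteq> 0" "B \<noteq> 0"
  shows "is_circle (affine_map A B C ` S) \<or> is_line (affine_map A B C ` S)"
  using assms is_circle_affine_image is_line_affine_image by blast

definition qcis :: "quat \<Rightarrow> real \<Rightarrow> quat" where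
  "qcis I t = qof_real (cos t) + qof_real (sin t) * I"

definition std_circle :: "quat \<Rightarrow> hquat set" where
  "std_circle I = range (\<lambda>t. Fin (qcis I t))"

lemma is_circle_std_circle: "unit_imaginary I \<Longrightarrow> is_circle (std_circle I)"
  unfolding is_circle_def std_circle_def qcis_def SetCompr_True_eq_range
  by (rule exI[of _ 0], rule exI[of _ 1], rule exI[of _ I], rule exI[of _ 1])
    (auto simp: unit_imaginary_def qinner_def qnormsq_def power2_eq_square)

lemma qcis_add:
  assumes "unit_imaginary I"
  shows "qcis I s * qcis I t = qcis I (s + t)"
proof -
  have "qcis I s * qcis I t = qof_real (cos s * cos t) + qof_real (cos s * sin t + sin s * cos t) * I
      + qof_real (sin s * sin t) * (I * I)"
    by (simp add: qcis_def quat_eq_iff algebra_simps)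
  also have "\<dots> = qcis I (s + t)"
    unfolding unit_imaginary_square[OF assms] qcis_def by (simp add: quat_eq_iff cos_add sin_add)
  finally show ?thesis .
qed

lemma qcis_0 [simp]: "qcis I 0 = 1"
  by (simp add: qcis_def)

lemma qcis_nonzero:
  assumes "unit_imaginary I"
  shows "qcis I t \<noteq> 0"
proof
  assume "qcis I t = 0"
  then have "qcis I t * qcis I (- t) = 0"
    by simp
  then show False
    by (simp add: qcis_add[OF assms])
qed

lemma qcis_polar_form:
  "qof_real x + qof_real y * I = qof_real (cmod (Complex x y)) * qcis I (Arg (Complex x y))"
proof -
  have "x = cmod (Complex x y) * cos (Arg (Complex x y))" "y = cmod (Complex x y) * sin (Arg (Complex x y))"
    using Re_rcis[of "cmod (Complex x y)" "Arg (Complex x y)"] Im_rcis[of "cmod (Complex x y)" "Arg (Complex x y)"]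
    unfolding rcis_cmod_Arg by simp_all
  then show ?thesis
    by (simp add: qcis_def distrib_left qof_real_mult_assoc flip: qof_real_mult)
qed

section \<open>Moebius images of circles\<close>

lemma mobius_antidiagonal: "mobius (0, 1, 1, 0) (Fin x) = (if x = 0 then Infty else Fin (inverse x))"
  by (simp add: mobius_def)

text \<open>Coordinates adapted to a circle: \<open>I\<close> spans the plane of the circle together with \<open>1\<close>,
  and \<open>H\<close> is the imaginary offset orthogonal to it (possibly \<open>0\<close>).\<close>

definition orth_frame :: "quat \<Rightarrow> quat \<Rightarrow> bool" where
  "orth_frame I H \<longleftrightarrow> unit_imaginary I \<and> qRe H = 0 \<and> qinner I H = 0"

definition frame_vec :: "quat \<Rightarrow> quat \<Rightarrow> real \<Rightarrow> real \<Rightarrow> real \<Rightarrow> quat" where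
  "frame_vec I H a b c = qof_real a + qof_real b * I + qof_real c * H"

lemma orth_frame_components:
  assumes "orth_frame I H"
  shows "qRe I = 0" "qRe H = 0" "qI I * qI I + qJ I * qJ I + qK I * qK I = 1"
    "qI I * qI H + qJ I * qJ H + qK I * qK H = 0"
    "qnormsq H = qI H * qI H + qJ H * qJ H + qK H * qK H"
  using assms unfolding orth_frame_def unit_imaginary_def qnormsq_def qinner_def
  by (auto simp: power2_eq_square)

lemma qinner_frame_vec:
  assumes "orth_frame I H"
  shows "qinner (frame_vec I H a b c) (frame_vec I H a' b' c') = a*a' + b*b' + c*c' * qnormsq H"
proof -
  note h = orth_frame_components[OF assms]
  have "qinner (frame_vec I H a b c) (frame_vec I H a' b' c') = a*a' + b*b' * (qI I * qI I + qJ I * qJ I + qK I * qK I)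
      + (b*c' + c*b') * (qI I * qI H + qJ I * qJ H + qK I * qK H) + c*c' * (qI H * qI H + qJ H * qJ H + qK H * qK H)"
    by (simp add: frame_vec_def qinner_def h(1,2) algebra_simps)
  then show ?thesis
    by (simp only: h(3,4) h(5)[symmetric])
qed

lemma qnormsq_frame_vec:
  assumes "orth_frame I H"
  shows "qnormsq (frame_vec I H a b c) = a\<^sup>2 + b\<^sup>2 + c\<^sup>2 * qnormsq H"
  using qinner_frame_vec[OF assms, of a b c a b c] by (simp add: qinner_self power2_eq_square)

lemma frame_vec_eq_0_iff:
  assumes "orth_frame I H"
  shows "frame_vec I H a b c = 0 \<longleftrightarrow> a\<^sup>2 + b\<^sup>2 + c\<^sup>2 * qnormsq H = 0"
  using qnormsq_frame_vec[OF assms] qnormsq_eq_0_iff by metis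

lemma inverse_frame_vec:
  assumes "orth_frame I H" and F: "F = a\<^sup>2 + b\<^sup>2 + c\<^sup>2 * qnormsq H"
  shows "inverse (frame_vec I H a b c) = frame_vec I H (a / F) (- b / F) (- c / F)"
proof -
  note h = orth_frame_components[OF assms(1)]
  have "qnormsq (frame_vec I H a b c) = F"
    using qnormsq_frame_vec[OF assms(1)] F by simp
  then show ?thesis
    by (simp add: quat_eq_iff) (simp add: frame_vec_def h(1,2) add_divide_distrib diff_divide_distrib)
qed

lemma frame_vec_lincomb:
  "frame_vec I H a b c + qof_real x * frame_vec I H a1 b1 c1 + qof_real y * frame_vec I H a2 b2 c2 =
   frame_vec I H (a + x*a1 + y*a2) (b + x*b1 + y*b2) (c + x*c1 + y*c2)"
  by (simp add: frame_vec_def quat_eq_iff algebra_simps)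

lemma qcis_translate_eq_frame_vec: "qcis I t + qof_real g + H = frame_vec I H (g + cos t) (sin t) 1"
  by (simp add: frame_vec_def qcis_def quat_eq_iff)

lemma orth_frame_orthogonal_part:
  assumes I: "unit_imaginary I"
  shows "orth_frame I (G - qof_real (qRe G) - qof_real (qinner G I) * I)"
proof -
  have "qinner I (G - qof_real (qRe G) - qof_real (qinner G I) * I) = qinner G I - qinner G I * qnormsq I"
    using I unfolding qinner_def qnormsq_def unit_imaginary_def by (simp add: algebra_simps power2_eq_square)
  then show ?thesis
    using I unfolding orth_frame_def by (simp add: unit_imaginary_def)
qed

lemma orth_frame_qcis_mult:
  assumes "orth_frame I H"
  shows "orth_frame I (qcis I s * H)"
proof -
  note h = orth_frame_components[OF assms]
  have IH: "qRe (I * H) = 0" "qinner I (I * H) = 0"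
    using h(1,2,4) by (simp_all add: qinner_def algebra_simps)
  have "qcis I s * H = qof_real (cos s) * H + qof_real (sin s) * (I * H)"
    by (simp add: qcis_def distrib_right qof_real_mult_right)
  moreover have "qinner I H = 0"
    using assms by (simp add: orth_frame_def)
  ultimately show ?thesis
    using assms IH h(2) by (simp add: orth_frame_def qinner_add_right qinner_scale_right)
qed

lemma orth_frame_0: "unit_imaginary I \<Longrightarrow> orth_frame I 0"
  by (simp add: orth_frame_def qinner_def)

lemma inversion_point_circle_through_0:
  assumes "unit_imaginary I"
  shows "mobius (0, 1, 1, 0) (Fin (qcis I t + 1)) =
    (if 1 + cos t = 0 then Infty else Fin (qof_real (1/2) + qof_real (- sin t / (2 + 2 * cos t)) * I))"
proof -
  have fr: "orth_frame I 0"
    using assms by (rule orth_frame_0)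
  have x: "qcis I t + 1 = frame_vec I 0 (1 + cos t) (sin t) 0"
    by (simp add: frame_vec_def qcis_def quat_eq_iff)
  have F: "(1 + cos t)\<^sup>2 + (sin t)\<^sup>2 + 0\<^sup>2 * qnormsq 0 = 2 + 2 * cos t"
    by (simp add: power2_eq_square algebra_simps)
  show ?thesis
  proof (cases "1 + cos t = 0")
    case True
    then show ?thesis
      unfolding x mobius_antidiagonal using F frame_vec_eq_0_iff[OF fr] by simp
  next
    case False
    then have half: "(1 + cos t) / (2 + 2 * cos t) = 1/2"
      by (simp add: field_simps)
    have "frame_vec I 0 (1 + cos t) (sin t) 0 \<noteq> 0"
      using False F frame_vec_eq_0_iff[OF fr] by simp
    with False show ?thesis
      unfolding x mobius_antidiagonal inverse_frame_vec[OF fr F[symmetric]] half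
      by (simp add: frame_vec_def)
  qed
qed

lemma inversion_circle_through_0:
  assumes "unit_imaginary I"
  shows "is_line (range (\<lambda>t. mobius (0, 1, 1, 0) (Fin (qcis I t + 1))))"
proof -
  have "range (\<lambda>t. mobius (0, 1, 1, 0) (Fin (qcis I t + 1))) =
      insert Infty {Fin (qof_real (1/2) + qof_real \<tau> * I) | \<tau>. True}"
  proof (intro set_eqI iffI)
    fix z assume "z \<in> range (\<lambda>t. mobius (0, 1, 1, 0) (Fin (qcis I t + 1)))"
    then show "z \<in> insert Infty {Fin (qof_real (1/2) + qof_real \<tau> * I) | \<tau>. True}"
      by (auto simp: inversion_point_circle_through_0[OF assms])
  next
    fix z assume z: "z \<in> insert Infty {Fin (qof_real (1/2) + qof_real \<tau> * I) | \<tau>. True}"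
    show "z \<in> range (\<lambda>t. mobius (0, 1, 1, 0) (Fin (qcis I t + 1)))"
    proof (cases "z = Infty")
      case True
      then show ?thesis
        by (intro range_eqI[of _ _ pi]) (simp add: inversion_point_circle_through_0[OF assms])
    next
      case False
      then obtain \<tau> where z: "z = Fin (qof_real (1/2) + qof_real \<tau> * I)"
        using z by blast
      txt \<open>Rational parametrisation of the circle: \<open>tan (t / 2) = - 2 \<tau>\<close>.\<close>
      define u where "u = 2 * \<tau>"
      have pos: "1 + u\<^sup>2 > 0"
        by (simp add: add_pos_nonneg)
      have "((1 - u\<^sup>2) / (1 + u\<^sup>2))\<^sup>2 + (- 2 * u / (1 + u\<^sup>2))\<^sup>2 = 1"
        using pos by (simp add: power_divide field_simps) algebra
      then obtain t where t: "(1 - u\<^sup>2) / (1 + u\<^sup>2) = cos t" "- 2 * u / (1 + u\<^sup>2) = sin t"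
        by (rule sincos_total_2pi)
      have "1 + cos t \<noteq> 0"
        unfolding t(1)[symmetric] using pos by (simp add: field_simps)
      moreover have "- sin t / (2 + 2 * cos t) = \<tau>"
        unfolding t[symmetric] using pos by (simp add: field_simps u_def)
      ultimately show ?thesis
        unfolding z by (intro range_eqI[of _ _ t]) (simp add: inversion_point_circle_through_0[OF assms])
    qed
  qed
  then show ?thesis
    unfolding is_line_def using unit_imaginary_nonzero[OF assms] by blast
qed

text \<open>The real algebra behind inverting the circle \<open>\<gamma> + e\<^sup>I\<^sup>t + H\<close> with \<open>n = |H|\<^sup>2\<close>, written in the
  coordinates \<open>(a, b, c) \<mapsto> a + b I + c H\<close>. The image circle is parametrised by
  \<open>(\<alpha>, w)\<close> with \<open>\<Delta> \<alpha>\<^sup>2 + w\<^sup>2 = 1\<close>, as the point with coordinates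
  \<open>((D \<gamma> + w p) / \<Delta>, - \<alpha>, (2 \<gamma> w - m) / \<Delta>)\<close>.\<close>

locale circle_inversion =
  fixes \<gamma> n :: real
  assumes gamma_nonneg: "\<gamma> \<ge> 0" and avoids_0: "(1 - \<gamma>)\<^sup>2 + n > 0"
begin

definition m where "m = 1 + \<gamma>\<^sup>2 + n"
definition D where "D = \<gamma>\<^sup>2 + n - 1"
definition p where "p = 1 + n - \<gamma>\<^sup>2"
definition \<Delta> where "\<Delta> = m\<^sup>2 - 4 * \<gamma>\<^sup>2"

lemma m_minus_pos:
  assumes "w \<le> 1"
  shows "m - 2 * \<gamma> * w > 0"
proof -
  have "2 * \<gamma> * w \<le> 2 * \<gamma>"
    using assms gamma_nonneg by (simp add: mult_left_le)
  moreover have "m - 2 * \<gamma> = (1 - \<gamma>)\<^sup>2 + n"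
    unfolding m_def by (simp add: power2_eq_square algebra_simps)
  ultimately show ?thesis
    using avoids_0 by linarith
qed

lemma Delta_eq: "\<Delta> = p\<^sup>2 + 4 * \<gamma>\<^sup>2 * n"
  unfolding \<Delta>_def m_def p_def by algebra

lemma Delta_pos: "\<Delta> > 0"
proof -
  have "m + 2 * \<gamma> > 0"
    using m_minus_pos[of "-1"] gamma_nonneg by simp
  moreover have "\<Delta> = (m - 2 * \<gamma>) * (m + 2 * \<gamma>)"
    unfolding \<Delta>_def by algebra
  ultimately show ?thesis
    using m_minus_pos[of 1] by simp
qed

lemma inversion_forward:
  assumes cs: "c\<^sup>2 + s\<^sup>2 = 1"
  defines "E \<equiv> m + 2 * \<gamma> * c"
  shows "E = (\<gamma> + c)\<^sup>2 + s\<^sup>2 + 1\<^sup>2 * n" "E > 0"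
    "(D * \<gamma> + (m * c + 2 * \<gamma>) / E * p) / \<Delta> = (\<gamma> + c) / E"
    "(2 * \<gamma> * ((m * c + 2 * \<gamma>) / E) - m) / \<Delta> = - 1 / E"
    "\<Delta> * (s / E)\<^sup>2 + ((m * c + 2 * \<gamma>) / E)\<^sup>2 = 1"
proof -
  show "E = (\<gamma> + c)\<^sup>2 + s\<^sup>2 + 1\<^sup>2 * n"
    unfolding E_def m_def using cs by (simp add: power2_eq_square algebra_simps)
  have "c \<ge> -1"
    using cs by (smt (verit) power2_le_imp_le zero_le_power2 power2_minus one_power2)
  then show "E > 0"
    using m_minus_pos[of "- c"] unfolding E_def by simp
  moreover have "\<Delta> > 0"
    by (rule Delta_pos)
  moreover have "D * \<gamma> * E + (m * c + 2 * \<gamma>) * p = \<Delta> * (\<gamma> + c)"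
    unfolding E_def D_def m_def p_def \<Delta>_def by algebra
  moreover have "s\<^sup>2 * \<Delta> + (m * c + 2 * \<gamma>)\<^sup>2 = E\<^sup>2"
    unfolding E_def m_def \<Delta>_def using cs by algebra
  ultimately show "(D * \<gamma> + (m * c + 2 * \<gamma>) / E * p) / \<Delta> = (\<gamma> + c) / E"
    "\<Delta> * (s / E)\<^sup>2 + ((m * c + 2 * \<gamma>) / E)\<^sup>2 = 1"
    by (simp_all add: field_simps power2_eq_square)
  have "2 * \<gamma> * ((m * c + 2 * \<gamma>) / E) - m = (2 * \<gamma> * (m * c + 2 * \<gamma>) - m * E) / E"
    using \<open>E > 0\<close> by (simp add: field_simps)
  also have "2 * \<gamma> * (m * c + 2 * \<gamma>) - m * E = - \<Delta>"
    unfolding E_def \<Delta>_def by algebra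
  finally show "(2 * \<gamma> * ((m * c + 2 * \<gamma>) / E) - m) / \<Delta> = - 1 / E"
    using \<open>\<Delta> > 0\<close> by simp
qed

lemma inversion_backward:
  assumes aw: "\<Delta> * \<alpha>\<^sup>2 + w\<^sup>2 = 1"
  obtains c s where "c\<^sup>2 + s\<^sup>2 = 1" "\<alpha> = s / (m + 2 * \<gamma> * c)" "w = (m * c + 2 * \<gamma>) / (m + 2 * \<gamma> * c)"
proof -
  have "w\<^sup>2 \<le> 1"
    using aw Delta_pos by (smt (verit) mult_nonneg_nonneg zero_le_power2)
  then have "w \<le> 1"
    using power2_le_imp_le[of w 1] by simp
  then have d: "m - 2 * \<gamma> * w > 0"
    by (rule m_minus_pos)
  define c s where "c = (m * w - 2 * \<gamma>) / (m - 2 * \<gamma> * w)" and "s = \<Delta> * \<alpha> / (m - 2 * \<gamma> * w)"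
  have E: "m + 2 * \<gamma> * c = \<Delta> / (m - 2 * \<gamma> * w)"
    unfolding c_def \<Delta>_def using d by (simp add: field_simps) algebra
  have "\<Delta> * \<alpha>\<^sup>2 = 1 - w\<^sup>2"
    using aw by linarith
  then have "\<Delta> * (\<Delta> * \<alpha>\<^sup>2) = \<Delta> * (1 - w\<^sup>2)"
    by simp
  then have "(m * w - 2 * \<gamma>)\<^sup>2 + \<Delta> * (\<Delta> * \<alpha>\<^sup>2) = (m - 2 * \<gamma> * w)\<^sup>2"
    unfolding \<Delta>_def by algebra
  moreover have "c\<^sup>2 + s\<^sup>2 = ((m * w - 2 * \<gamma>)\<^sup>2 + \<Delta> * (\<Delta> * \<alpha>\<^sup>2)) / (m - 2 * \<gamma> * w)\<^sup>2"
    unfolding c_def s_def by (simp add: power_divide add_divide_distrib power_mult_distrib power2_eq_square)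
  ultimately have cs: "c\<^sup>2 + s\<^sup>2 = 1"
    using d by simp
  have \<alpha>: "\<alpha> = s / (m + 2 * \<gamma> * c)"
    unfolding E s_def using d Delta_pos by simp
  have "m * c + 2 * \<gamma> = \<Delta> * w / (m - 2 * \<gamma> * w)"
    unfolding c_def \<Delta>_def using d by (simp add: field_simps) algebra
  then have "w = (m * c + 2 * \<gamma>) / (m + 2 * \<gamma> * c)"
    unfolding E using d Delta_pos by simp
  with cs \<alpha> show ?thesis
    by (rule that)
qed

lemma ellipse_image_is_circle:
  assumes fr: "orth_frame I H" and n: "qnormsq H = n"
  shows "is_circle {Fin (frame_vec I H ((D * \<gamma> + w * p) / \<Delta>) (- \<alpha>) ((2 * \<gamma> * w - m) / \<Delta>)) | \<alpha> w.
    \<Delta> * \<alpha>\<^sup>2 + w\<^sup>2 = 1}" (is "is_circle ?C")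
proof -
  define r where "r = sqrt \<Delta>"
  have r: "r > 0" "r * r = \<Delta>"
    unfolding r_def using Delta_pos by simp_all
  define cen u v where "cen = frame_vec I H (D * \<gamma> / \<Delta>) 0 (- m / \<Delta>)"
    and "u = frame_vec I H 0 (- 1) 0" and "v = frame_vec I H (p / r) 0 (2 * \<gamma> / r)"
  have "qinner v v = (p\<^sup>2 + 4 * \<gamma>\<^sup>2 * n) / (r * r)"
    unfolding v_def qinner_frame_vec[OF fr] n by (simp add: power2_eq_square add_divide_distrib)
  then have orthonormal: "qinner u u = 1" "qinner v v = 1" "qinner u v = 0"
    unfolding u_def v_def qinner_frame_vec[OF fr] using r Delta_pos by (simp_all add: Delta_eq)
  have point: "cen + qof_real \<alpha> * u + qof_real \<beta> * v =
      frame_vec I H ((D * \<gamma> + (\<beta> * r) * p) / \<Delta>) (- \<alpha>) ((2 * \<gamma> * (\<beta> * r) - m) / \<Delta>)" for \<alpha> \<beta>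
    unfolding cen_def u_def v_def frame_vec_lincomb using r by (simp add: field_simps flip: r(2))
  have radius: "\<alpha>\<^sup>2 + \<beta>\<^sup>2 = (1 / r)\<^sup>2 \<longleftrightarrow> \<Delta> * \<alpha>\<^sup>2 + (\<beta> * r)\<^sup>2 = 1" for \<alpha> \<beta>
    using r by (simp add: field_simps power2_eq_square flip: r(2))
  have "?C = {Fin (cen + qof_real \<alpha> * u + qof_real \<beta> * v) | \<alpha> \<beta>. \<alpha>\<^sup>2 + \<beta>\<^sup>2 = (1 / r)\<^sup>2}"
  proof (intro set_eqI iffI)
    fix z assume "z \<in> ?C"
    then obtain \<alpha> w where z: "z = Fin (frame_vec I H ((D * \<gamma> + w * p) / \<Delta>) (- \<alpha>) ((2 * \<gamma> * w - m) / \<Delta>))"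
      and aw: "\<Delta> * \<alpha>\<^sup>2 + w\<^sup>2 = 1"
      by blast
    have "w / r * r = w"
      using r by simp
    then have "z = Fin (cen + qof_real \<alpha> * u + qof_real (w / r) * v)" "\<alpha>\<^sup>2 + (w / r)\<^sup>2 = (1 / r)\<^sup>2"
      using z aw by (simp_all only: point radius)
    then show "z \<in> {Fin (cen + qof_real \<alpha> * u + qof_real \<beta> * v) | \<alpha> \<beta>. \<alpha>\<^sup>2 + \<beta>\<^sup>2 = (1 / r)\<^sup>2}"
      by blast
  next
    fix z assume "z \<in> {Fin (cen + qof_real \<alpha> * u + qof_real \<beta> * v) | \<alpha> \<beta>. \<alpha>\<^sup>2 + \<beta>\<^sup>2 = (1 / r)\<^sup>2}"
    then obtain \<alpha> \<beta> where "z = Fin (cen + qof_real \<alpha> * u + qof_real \<beta> * v)" "\<alpha>\<^sup>2 + \<beta>\<^sup>2 = (1 / r)\<^sup>2"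
      by blast
    then have "z = Fin (frame_vec I H ((D * \<gamma> + (\<beta> * r) * p) / \<Delta>) (- \<alpha>) ((2 * \<gamma> * (\<beta> * r) - m) / \<Delta>))"
      "\<Delta> * \<alpha>\<^sup>2 + (\<beta> * r)\<^sup>2 = 1"
      by (simp_all only: point radius)
    then show "z \<in> ?C"
      by blast
  qed
  then show ?thesis
    using orthonormal r by (intro is_circleI[of "1 / r" u v]) simp_all
qed

lemma inversion_image_eq_ellipse:
  assumes fr: "orth_frame I H" and n: "qnormsq H = n"
  shows "range (\<lambda>t. mobius (0, 1, 1, 0) (Fin (frame_vec I H (\<gamma> + cos t) (sin t) 1))) =
    {Fin (frame_vec I H ((D * \<gamma> + w * p) / \<Delta>) (- \<alpha>) ((2 * \<gamma> * w - m) / \<Delta>)) | \<alpha> w.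
      \<Delta> * \<alpha>\<^sup>2 + w\<^sup>2 = 1}" (is "?L = ?C")
proof -
  have inverse_point: "mobius (0, 1, 1, 0) (Fin (frame_vec I H (\<gamma> + c) s 1)) =
      Fin (frame_vec I H ((D * \<gamma> + w * p) / \<Delta>) (- \<alpha>) ((2 * \<gamma> * w - m) / \<Delta>)) \<and>
      \<Delta> * \<alpha>\<^sup>2 + w\<^sup>2 = 1"
    if cs: "c\<^sup>2 + s\<^sup>2 = 1" and "\<alpha> = s / (m + 2 * \<gamma> * c)" "w = (m * c + 2 * \<gamma>) / (m + 2 * \<gamma> * c)"
    for c s \<alpha> w
  proof -
    note fw = inversion_forward[OF cs]
    have E: "m + 2 * \<gamma> * c = (\<gamma> + c)\<^sup>2 + s\<^sup>2 + 1\<^sup>2 * qnormsq H"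
      using fw(1) n by simp
    have "frame_vec I H (\<gamma> + c) s 1 \<noteq> 0"
      using fw(2) E frame_vec_eq_0_iff[OF fr] by simp
    then show ?thesis
      using that fw(3-5) inverse_frame_vec[OF fr E]
      by (simp add: mobius_antidiagonal)
  qed
  show ?thesis
  proof (intro set_eqI iffI)
    fix z assume "z \<in> ?L"
    then obtain t where "z = mobius (0, 1, 1, 0) (Fin (frame_vec I H (\<gamma> + cos t) (sin t) 1))"
      by blast
    with inverse_point[OF sin_cos_squared_add2 refl refl] show "z \<in> ?C"
      by blast
  next
    fix z assume "z \<in> ?C"
    then obtain \<alpha> w where z: "z = Fin (frame_vec I H ((D * \<gamma> + w * p) / \<Delta>) (- \<alpha>) ((2 * \<gamma> * w - m) / \<Delta>))"
      and aw: "\<Delta> * \<alpha>\<^sup>2 + w\<^sup>2 = 1"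
      by blast
    obtain c s where cs: "c\<^sup>2 + s\<^sup>2 = 1"
      and \<alpha>w: "\<alpha> = s / (m + 2 * \<gamma> * c)" "w = (m * c + 2 * \<gamma>) / (m + 2 * \<gamma> * c)"
      using inversion_backward[OF aw] .
    obtain t where "c = cos t" "s = sin t"
      using sincos_total_2pi[OF cs] by metis
    with inverse_point[OF cs \<alpha>w] z have "z = mobius (0, 1, 1, 0) (Fin (frame_vec I H (\<gamma> + cos t) (sin t) 1))"
      by simp
    then show "z \<in> ?L"
      by blast
  qed
qed

end

lemma inversion_circle_normal_form:
  assumes fr: "orth_frame I H" and "\<gamma> \<ge> 0"
  shows "is_circle (range (\<lambda>t. mobius (0, 1, 1, 0) (Fin (qcis I t + qof_real \<gamma> + H)))) \<or>
    is_line (range (\<lambda>t. mobius (0, 1, 1, 0) (Fin (qcis I t + qof_real \<gamma> + H))))"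
proof (cases "(1 - \<gamma>)\<^sup>2 + qnormsq H > 0")
  case True
  then interpret circle_inversion \<gamma> "qnormsq H"
    using assms by unfold_locales
  show ?thesis
    unfolding qcis_translate_eq_frame_vec inversion_image_eq_ellipse[OF fr refl]
    using ellipse_image_is_circle[OF fr refl] by blast
next
  case False
  then have "(1 - \<gamma>)\<^sup>2 = 0" "qnormsq H = 0"
    using qnormsq_nonneg[of H] zero_le_power2[of "1 - \<gamma>"] by linarith+
  then have "\<gamma> = 1" "H = 0"
    by simp_all
  moreover have "unit_imaginary I"
    using fr by (simp add: orth_frame_def)
  ultimately show ?thesis
    using inversion_circle_through_0 by simp
qed

text \<open>Every circle \<open>e\<^sup>I\<^sup>t + G\<close> is, after left multiplication by a unit \<open>e\<close> of \<open>\<real> + \<real>I\<close> and a shift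
  of the parameter, of the form \<open>e\<^sup>I\<^sup>t + \<gamma> + H\<close> with \<open>\<gamma> \<ge> 0\<close> real and \<open>H \<perp> \<real> + \<real>I\<close>: split \<open>G\<close>
  along \<open>\<real> + \<real>I\<close> and write its component there in polar form \<open>\<gamma> e\<^sup>I\<^sup>\<phi>\<close>.\<close>

lemma translated_circle_normal_form:
  assumes I: "unit_imaginary I"
  obtains e \<gamma> H p where "e \<noteq> 0" "\<gamma> \<ge> 0" "orth_frame I H"
    "\<And>t. e * (qcis I t + G) = qcis I (t + p) + qof_real \<gamma> + H"
proof -
  define H where "H = G - qof_real (qRe G) - qof_real (qinner G I) * I"
  have fr: "orth_frame I H"
    unfolding H_def using I by (rule orth_frame_orthogonal_part)
  define \<gamma> \<phi> where "\<gamma> = cmod (Complex (qRe G) (qinner G I))" and "\<phi> = Arg (Complex (qRe G) (qinner G I))"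
  have G: "G = qof_real \<gamma> * qcis I \<phi> + H"
    unfolding H_def \<gamma>_def \<phi>_def qcis_polar_form[symmetric] by (simp add: algebra_simps)
  define e where "e = qcis I (- \<phi>)"
  show ?thesis
  proof (rule that)
    show "e \<noteq> 0"
      unfolding e_def using I by (rule qcis_nonzero)
    show "\<gamma> \<ge> 0"
      by (simp add: \<gamma>_def)
    show "orth_frame I (e * H)"
      unfolding e_def using fr by (rule orth_frame_qcis_mult)
    show "e * (qcis I t + G) = qcis I (t + - \<phi>) + qof_real \<gamma> + e * H" for t
      unfolding G e_def
      by (simp add: distrib_left qcis_add[OF I] qof_real_left_commute add.commute add.left_commute)
  qed
qed

lemma range_shift: "range (\<lambda>t. f (t + p)) = range (f :: real \<Rightarrow> 'a)"
  by (metis (no_types) image_image surj_plus_right)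

lemma inversion_translated_circle:
  assumes I: "unit_imaginary I"
  shows "is_circle (range (\<lambda>t. mobius (0, 1, 1, 0) (Fin (qcis I t + G)))) \<or>
    is_line (range (\<lambda>t. mobius (0, 1, 1, 0) (Fin (qcis I t + G))))"
proof -
  obtain e \<gamma> H p where e: "e \<noteq> 0" and "\<gamma> \<ge> 0" "orth_frame I H"
    and rot: "\<And>t. e * (qcis I t + G) = qcis I (t + p) + qof_real \<gamma> + H"
    using translated_circle_normal_form[OF I, where G = G] by blast
  let ?F = "\<lambda>t. mobius (0, 1, 1, 0) (Fin (qcis I t + qof_real \<gamma> + H))"
  have "qcis I t + G = inverse e * (qcis I (t + p) + qof_real \<gamma> + H)" for t
    using rot[of t, symmetric] e by (simp add: quat_mult_inverse_cancel_left)
  then have "mobius (0, 1, 1, 0) (Fin (qcis I t + G)) = affine_map 1 e 0 (?F (t + p))" for t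
    using e by (simp add: mobius_antidiagonal affine_map_def nonzero_inverse_mult_distrib)
  then have "range (\<lambda>t. mobius (0, 1, 1, 0) (Fin (qcis I t + G))) = affine_map 1 e 0 ` range ?F"
    by (simp add: image_image range_shift[of "\<lambda>t. affine_map 1 e 0 (?F t)"])
  then show ?thesis
    using circle_or_line_affine_image[OF inversion_circle_normal_form[OF \<open>orth_frame I H\<close> \<open>\<gamma> \<ge> 0\<close>]] e
    by simp
qed

text \<open>For \<open>c \<noteq> 0\<close>, \<open>(a q + b) (c q + d)\<inverse> = a c\<inverse> + k (q + c\<inverse> d)\<inverse> c\<inverse>\<close> with \<open>k = b - a c\<inverse> d\<close>.\<close>

lemma mobius_lower_left_nonzero:
  assumes c: "c \<noteq> 0"
  shows "mobius (a, b, c, d) (Fin q) = affine_map (b - a * inverse c * d) (inverse c) (a * inverse c)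
    (mobius (0, 1, 1, 0) (Fin (q + inverse c * d)))"
proof -
  define k G where "k = b - a * inverse c * d" and "G = inverse c * d"
  have cq: "c * q + d = c * (q + G)"
    unfolding G_def using c by (simp add: distrib_left mult.assoc[symmetric])
  show ?thesis
  proof (cases "q + G = 0")
    case True
    then show ?thesis
      using cq by (simp add: mobius_def mobius_antidiagonal affine_map_def G_def)
  next
    case False
    have "a * inverse c * c = a"
      using c by (simp add: mult.assoc)
    then have "a * q + b = a * inverse c * (c * q + d) + k"
      unfolding k_def by (simp add: distrib_left mult.assoc[symmetric])
    then have "(a * q + b) * inverse (c * q + d) =
        a * inverse c * ((c * q + d) * inverse (c * q + d)) + k * inverse (c * q + d)"
      by (simp add: distrib_right mult.assoc)
    also have "\<dots> = a * inverse c + k * inverse (c * q + d)"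
      using False c cq by simp
    also have "\<dots> = k * inverse (q + G) * inverse c + a * inverse c"
      unfolding cq using False c by (simp add: nonzero_inverse_mult_distrib mult.assoc)
    finally show ?thesis
      using False c cq by (simp add: mobius_def mobius_antidiagonal affine_map_def k_def G_def)
  qed
qed

lemma mobius_image_std_circle:
  assumes M: "M \<in> GL2H" and I: "unit_imaginary I"
  shows "is_circle (mobius M ` std_circle I) \<or> is_line (mobius M ` std_circle I)"
proof -
  obtain a b c d where M_eq: "M = (a, b, c, d)"
    by (cases M) auto
  show ?thesis
  proof (cases "c = 0")
    case True
    then have "a \<noteq> 0" "d \<noteq> 0"
      using GL2H_upper_triangular_diag_nonzero M M_eq by blast+
    moreover have "mobius M ` std_circle I = affine_map a (inverse d) (b * inverse d) ` std_circle I"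
      using mobius_upper_triangular[OF \<open>d \<noteq> 0\<close>] by (simp add: M_eq True)
    ultimately show ?thesis
      using is_circle_affine_image[OF is_circle_std_circle[OF I]] by simp
  next
    case False
    have "b - a * inverse c * d \<noteq> 0"
      using GL2H_lower_left_nonzero_schur M M_eq False by blast
    moreover have "mobius M ` std_circle I = affine_map (b - a * inverse c * d) (inverse c) (a * inverse c) `
        range (\<lambda>t. mobius (0, 1, 1, 0) (Fin (qcis I t + inverse c * d)))"
      unfolding std_circle_def image_image M_eq mobius_lower_left_nonzero[OF False] ..
    ultimately show ?thesis
      using circle_or_line_affine_image[OF inversion_translated_circle[OF I]] False by simp
  qed
qed

section \<open>Orbits under conjugation by a centralizer\<close>

lemma real_span_commute:
  "(qof_real x + qof_real y * I) * (qof_real x' + qof_real y' * I) =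
   (qof_real x' + qof_real y' * I) * (qof_real x + qof_real y * I)"
  by (simp add: quat_eq_iff algebra_simps)

lemma qcis_commute_real_span: "qcis I t * (qof_real x + qof_real y * I) = (qof_real x + qof_real y * I) * qcis I t"
  unfolding qcis_def by (rule real_span_commute)

lemma anticommute_qcis:
  assumes "qRe X = 0" "qRe I = 0" "qinner X I = 0"
  shows "X * qcis I t = qcis I (- t) * X"
proof -
  have "qI X * qI I + qJ X * qJ I + qK X * qK I = 0"
    using assms by (simp add: qinner_def)
  then have "X * I = - (I * X)"
    using assms(1,2) by (simp add: quat_eq_iff algebra_simps)
  have "X * qcis I t = qof_real (cos t) * X + qof_real (sin t) * (X * I)"
    by (simp add: qcis_def distrib_left qof_real_commute mult.assoc)
  also have "\<dots> = qcis I (- t) * X"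
    unfolding \<open>X * I = - (I * X)\<close> by (simp add: qcis_def left_diff_distrib qof_real_mult_right qof_real_uminus)
  finally show ?thesis .
qed

text \<open>Rotation about the axis \<open>\<real> + \<real>I\<close>: conjugation by \<open>e\<^sup>I\<^sup>\<phi>\<close> fixes \<open>\<real> + \<real>I\<close> and turns the
  orthogonal part \<open>X\<close> through the angle \<open>2\<phi>\<close>.\<close>

lemma conj_qcis:
  assumes I: "unit_imaginary I" and X: "qRe X = 0" "qinner X I = 0"
    and \<delta>: "\<delta> = qof_real x + qof_real y * I"
  shows "qcis I \<phi> * (\<delta> + X) * qcis I (- \<phi>) = \<delta> + qcis I (2 * \<phi>) * X"
proof -
  have I0: "qRe I = 0"
    using I by (simp add: unit_imaginary_def)
  have "qcis I \<phi> * \<delta> * qcis I (- \<phi>) = \<delta> * (qcis I \<phi> * qcis I (- \<phi>))"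
    unfolding \<delta> by (simp add: qcis_commute_real_span mult.assoc)
  moreover have "qcis I \<phi> * X * qcis I (- \<phi>) = qcis I \<phi> * qcis I \<phi> * X"
    using anticommute_qcis[OF X(1) I0 X(2), of "- \<phi>"] by (simp add: mult.assoc)
  ultimately show ?thesis
    by (simp add: distrib_left distrib_right qcis_add[OF I])
qed

lemma qcis_inverse: "unit_imaginary I \<Longrightarrow> inverse (qcis I \<phi>) = qcis I (- \<phi>)"
  by (metis add.right_inverse inverse_unique qcis_0 qcis_add)

lemma conj_scale_invariant:
  assumes "r \<noteq> 0" "a \<noteq> 0"
  shows "(qof_real r * a) * x * inverse (qof_real r * a) = a * x * inverse a"
proof -
  have "inverse (qof_real r) = qof_real (1 / r)"
    using assms(1) by (simp add: quat_eq_iff qnormsq_def power2_eq_square)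
  moreover have "qof_real r \<noteq> 0"
    using assms(1) by (simp add: quat_eq_iff)
  ultimately have "(qof_real r * a) * x * inverse (qof_real r * a) =
      qof_real r * (a * x * inverse a) * qof_real (1 / r)"
    using assms(2) by (simp add: nonzero_inverse_mult_distrib mult.assoc)
  also have "\<dots> = qof_real (r * (1 / r)) * (a * x * inverse a)"
    by (simp only: qof_real_commute[of "1 / r"] qof_real_mult mult.assoc)
  finally show ?thesis
    using assms(1) by simp
qed

lemma conj_orbit_eq_rotation:
  assumes I: "unit_imaginary I" and X: "qRe X = 0" "qinner X I = 0"
    and \<delta>: "\<delta> = qof_real x + qof_real y * I"
  shows "{a * (\<delta> + X) * inverse a | a. a \<noteq> 0 \<and> a * I = I * a} = range (\<lambda>\<theta>. \<delta> + qcis I \<theta> * X)"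
proof (intro set_eqI iffI)
  fix z assume "z \<in> {a * (\<delta> + X) * inverse a | a. a \<noteq> 0 \<and> a * I = I * a}"
  then obtain a where z: "z = a * (\<delta> + X) * inverse a" and a: "a \<noteq> 0" "a * I = I * a"
    by blast
  obtain x' y' where "a = qof_real x' + qof_real y' * I"
    using quat_centralizer[OF a(2) unit_imaginary_qIm_nonzero[OF I]] .
  then obtain \<rho> \<phi> where a_eq: "a = qof_real \<rho> * qcis I \<phi>"
    using qcis_polar_form by metis
  with a(1) have "\<rho> \<noteq> 0"
    by auto
  have "z = qcis I \<phi> * (\<delta> + X) * qcis I (- \<phi>)"
    unfolding z a_eq conj_scale_invariant[OF \<open>\<rho> \<noteq> 0\<close> qcis_nonzero[OF I]] qcis_inverse[OF I] ..
  then show "z \<in> range (\<lambda>\<theta>. \<delta> + qcis I \<theta> * X)"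
    unfolding conj_qcis[OF I X \<delta>] by blast
next
  fix z assume "z \<in> range (\<lambda>\<theta>. \<delta> + qcis I \<theta> * X)"
  then obtain \<theta> where "z = \<delta> + qcis I (2 * (\<theta> / 2)) * X"
    by auto
  then have "z = qcis I (\<theta> / 2) * (\<delta> + X) * inverse (qcis I (\<theta> / 2))"
    unfolding conj_qcis[OF I X \<delta>, symmetric] qcis_inverse[OF I] .
  moreover have "qcis I (\<theta> / 2) * I = I * qcis I (\<theta> / 2)"
    using qcis_commute_real_span[of I "\<theta> / 2" 0 1] by simp
  ultimately show "z \<in> {a * (\<delta> + X) * inverse a | a. a \<noteq> 0 \<and> a * I = I * a}"
    using qcis_nonzero[OF I] by blast
qed

definition centralizer_orbit :: "quat \<Rightarrow> quat \<Rightarrow> quat set" where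
  "centralizer_orbit P W = {a * W * inverse a | a. a \<noteq> 0 \<and> a * P = P * a}"

lemma centralizer_orbit_self: "W \<in> centralizer_orbit P W"
  unfolding centralizer_orbit_def by (rule CollectI, rule exI[of _ 1]) simp

lemma centralizer_orbit_commuting:
  assumes Im: "qIm P \<noteq> 0" and PW: "P * W = W * P"
  shows "centralizer_orbit P W = {W}"
proof -
  have "a * W * inverse a = W" if a: "a \<noteq> 0" "a * P = P * a" for a
  proof -
    obtain x y where a_eq: "a = qof_real x + qof_real y * P"
      using quat_centralizer[OF a(2) Im] .
    have "a * W = qof_real x * W + qof_real y * (P * W)"
      unfolding a_eq by (simp add: distrib_right mult.assoc)
    moreover have "W * a = qof_real x * W + qof_real y * (W * P)"
      unfolding a_eq by (simp only: distrib_left qof_real_commute[of x W, symmetric] qof_real_left_commute[of W y P])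
    ultimately have "a * W = W * a"
      by (simp add: PW)
    with \<open>a \<noteq> 0\<close> show ?thesis
      by (simp add: mult.assoc)
  qed
  with centralizer_orbit_self[of W P] show ?thesis
    unfolding centralizer_orbit_def by blast
qed

lemma centralizer_orbit_not_singleton:
  assumes PW: "P * W \<noteq> W * P"
  shows "\<nexists>p. centralizer_orbit P W = {p}"
proof
  assume "\<exists>p. centralizer_orbit P W = {p}"
  then obtain p where orbit: "centralizer_orbit P W = {p}"
    by blast
  have "P \<noteq> 0"
    using PW by auto
  then have "P * W * inverse P \<in> centralizer_orbit P W"
    unfolding centralizer_orbit_def by blast
  with centralizer_orbit_self[of W P] have "P * W * inverse P = W"
    unfolding orbit by blast
  with conj_eq_iff_commute[OF \<open>P \<noteq> 0\<close>] have "P * W = W * P"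
    by simp
  with PW show False ..
qed

lemma quat_decompose_unit_imaginary:
  assumes "qIm P \<noteq> 0"
  obtains p r I where "r \<noteq> 0" "unit_imaginary I" "P = qof_real p + qof_real r * I"
proof -
  define r where "r = sqrt (qI P ^ 2 + qJ P ^ 2 + qK P ^ 2)"
  have r: "r > 0" "r\<^sup>2 = qI P ^ 2 + qJ P ^ 2 + qK P ^ 2"
    unfolding r_def using assms by (auto simp: qIm_nonzero_iff add_pos_nonneg add_nonneg_pos)
  define I where "I = Quat 0 (qI P / r) (qJ P / r) (qK P / r)"
  have "r \<noteq> 0"
    using r(1) by simp
  moreover have "qnormsq I = (qI P ^ 2 + qJ P ^ 2 + qK P ^ 2) / r\<^sup>2"
    unfolding I_def qnormsq_def by (simp add: power_divide add_divide_distrib)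
  then have "unit_imaginary I"
    unfolding unit_imaginary_def r(2)[symmetric] using r(1) by (simp add: I_def)
  moreover have "P = qof_real (qRe P) + qof_real r * I"
    unfolding I_def using r by (simp add: quat_eq_iff)
  ultimately show ?thesis
    by (rule that)
qed

lemma commute_iff_commute_imaginary:
  assumes "r \<noteq> 0" "P = qof_real p + qof_real r * I"
  shows "a * P = P * a \<longleftrightarrow> a * I = I * a"
proof -
  have "a * P = qof_real p * a + qof_real r * (a * I)" "P * a = qof_real p * a + qof_real r * (I * a)"
    unfolding assms(2) by (simp_all add: quat_eq_iff algebra_simps)
  moreover have "qof_real r * x = qof_real r * y \<longleftrightarrow> x = y" for x y
    using assms(1) by (auto simp: quat_eq_iff)
  ultimately show ?thesis
    by simp
qed

lemma centralizer_orbit_circle: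
  assumes Im: "qIm P \<noteq> 0" and PW: "P * W \<noteq> W * P"
  obtains A I where "A \<in> GL2H" "unit_imaginary I" "Fin ` centralizer_orbit P W = mobius A ` std_circle I"
proof -
  obtain p r I where r: "r \<noteq> 0" and I: "unit_imaginary I" and P: "P = qof_real p + qof_real r * I"
    using quat_decompose_unit_imaginary[OF Im] .
  define \<delta> X where "\<delta> = qof_real (qRe W) + qof_real (qinner W I) * I" and "X = W - \<delta>"
  have "X = W - qof_real (qRe W) - qof_real (qinner W I) * I"
    by (simp add: X_def \<delta>_def diff_diff_eq)
  then have "orth_frame I X"
    using orth_frame_orthogonal_part[OF I] by simp
  then have X: "qRe X = 0" "qinner X I = 0"
    by (simp_all add: orth_frame_def qinner_commute)
  have "X \<noteq> 0"
  proof
    assume "X = 0"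
    then have "P * W = P * \<delta>" "W * P = \<delta> * P"
      by (simp_all add: X_def)
    then have "P * W = W * P"
      unfolding P \<delta>_def using real_span_commute by metis
    with PW show False ..
  qed
  have "centralizer_orbit P W = range (\<lambda>\<theta>. \<delta> + qcis I \<theta> * X)"
    unfolding centralizer_orbit_def commute_iff_commute_imaginary[OF r P]
    using conj_orbit_eq_rotation[OF I X \<delta>_def] by (simp add: X_def)
  moreover define A :: qmat where "A = (1, \<delta> * inverse X, 0, inverse X)"
  moreover have "mobius A (Fin (qcis I \<theta>)) = Fin (\<delta> + qcis I \<theta> * X)" for \<theta>
    unfolding A_def using \<open>X \<noteq> 0\<close> by (simp add: mobius_upper_triangular affine_map_def mult.assoc add.commute)
  ultimately have "Fin ` centralizer_orbit P W = mobius A ` std_circle I"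
    unfolding std_circle_def by (simp add: image_image)
  moreover have "A \<in> GL2H"
    unfolding A_def using \<open>X \<noteq> 0\<close> by (intro GL2H_upper_triangular) simp_all
  ultimately show ?thesis
    using that I by blast
qed

section \<open>The maps with four prescribed values\<close>

text \<open>Once three points are sent to \<open>0, 1, \<infinity>\<close> on both sides, the remaining freedom is a scalar
  matrix \<open>diag(a, a)\<close>, i.e. conjugation by \<open>a\<close>.\<close>

lemma maps_with_three_prescribed_values:
  assumes N: "N \<in> GL2H" "mobius N z1 = Fin 0" "mobius N z2 = Fin 1" "mobius N z3 = Infty"
    and M: "M \<in> GL2H" "mobius M (Fin 0) = z1'" "mobius M (Fin 1) = z2'" "mobius M Infty = z3'"
    and \<gamma>: "\<gamma> \<in> GL2H" "mobius \<gamma> z1 = z1'" "mobius \<gamma> z2 = z2'" "mobius \<gamma> z3 = z3'"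
  obtains a where "a \<noteq> 0" "\<And>z. mobius \<gamma> z = mobius M (mobius (a, 0, 0, a) (mobius N z))"
proof -
  obtain N' where N': "N' \<in> GL2H" "\<And>z. mobius N' (mobius N z) = z" "\<And>z. mobius N (mobius N' z) = z"
    using mobius_inverse[OF N(1)] by blast
  obtain M' where M': "M' \<in> GL2H" "\<And>z. mobius M' (mobius M z) = z" "\<And>z. mobius M (mobius M' z) = z"
    using mobius_inverse[OF M(1)] by blast
  define \<sigma> where "\<sigma> = qmat_mult M' (qmat_mult \<gamma> N')"
  have \<sigma>: "mobius \<sigma> z = mobius M' (mobius \<gamma> (mobius N' z))" for z
    unfolding \<sigma>_def by (simp add: mobius_qmat_mult GL2H_mult \<gamma>(1) N'(1))
  have "\<sigma> \<in> GL2H"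
    unfolding \<sigma>_def by (intro GL2H_mult M'(1) \<gamma>(1) N'(1))
  moreover have "mobius \<sigma> (Fin 0) = Fin 0" "mobius \<sigma> (Fin 1) = Fin 1" "mobius \<sigma> Infty = Infty"
    unfolding \<sigma> by (metis N(2,3,4) N'(2) M(2,3,4) M'(2) \<gamma>(2,3,4))+
  ultimately obtain a where "a \<noteq> 0" "\<sigma> = (a, 0, 0, a)"
    by (rule GL2H_fixing_0_1_Infty)
  moreover have "mobius \<gamma> z = mobius M (mobius \<sigma> (mobius N z))" for z
    unfolding \<sigma> N'(2) M'(3) ..
  ultimately show ?thesis
    using that by simp
qed

lemma solution_set_eq_conj_image:
  assumes N: "N \<in> GL2H" "mobius N z1 = Fin 0" "mobius N z2 = Fin 1" "mobius N z3 = Infty"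
      "mobius N w = Fin P" "mobius N u = Fin W"
    and M: "M \<in> GL2H" "mobius M (Fin 0) = z1'" "mobius M (Fin 1) = z2'" "mobius M Infty = z3'"
      "mobius M (Fin P') = w'"
  shows "{mobius \<gamma> u | \<gamma>. \<gamma> \<in> GL2H \<and> mobius \<gamma> z1 = z1' \<and> mobius \<gamma> z2 = z2' \<and> mobius \<gamma> z3 = z3' \<and>
      mobius \<gamma> w = w'} = (\<lambda>a. mobius M (Fin (a * W * inverse a))) ` {a. a \<noteq> 0 \<and> a * P * inverse a = P'}"
    (is "?C = _")
proof (intro set_eqI iffI)
  fix z assume "z \<in> ?C"
  then obtain \<gamma> where z: "z = mobius \<gamma> u" and \<gamma>: "\<gamma> \<in> GL2H" "mobius \<gamma> z1 = z1'" "mobius \<gamma> z2 = z2'"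
    "mobius \<gamma> z3 = z3'" "mobius \<gamma> w = w'"
    by blast
  obtain a where a: "a \<noteq> 0" and \<gamma>_eq: "\<And>z. mobius \<gamma> z = mobius M (mobius (a, 0, 0, a) (mobius N z))"
    using maps_with_three_prescribed_values[OF N(1-4) M(1-4) \<gamma>(1-4)] by blast
  have "mobius M (Fin (a * P * inverse a)) = mobius M (Fin P')"
    using \<gamma>(5) \<gamma>_eq[of w] N(5) M(5) a by (simp add: mobius_scalar)
  then have "a * P * inverse a = P'"
    using mobius_inj[OF M(1)] by blast
  moreover have "z = mobius M (Fin (a * W * inverse a))"
    unfolding z \<gamma>_eq N(6) using a by (simp add: mobius_scalar)
  ultimately show "z \<in> (\<lambda>a. mobius M (Fin (a * W * inverse a))) ` {a. a \<noteq> 0 \<and> a * P * inverse a = P'}"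
    using a by blast
next
  fix z assume "z \<in> (\<lambda>a. mobius M (Fin (a * W * inverse a))) ` {a. a \<noteq> 0 \<and> a * P * inverse a = P'}"
  then obtain a where z: "z = mobius M (Fin (a * W * inverse a))" and a: "a \<noteq> 0" "a * P * inverse a = P'"
    by blast
  define \<gamma> where "\<gamma> = qmat_mult M (qmat_mult (a, 0, 0, a) N)"
  have \<gamma>_eq: "mobius \<gamma> z = mobius M (mobius (a, 0, 0, a) (mobius N z))" for z
    unfolding \<gamma>_def using a N(1) by (simp add: mobius_qmat_mult GL2H_mult GL2H_scalar)
  have "\<gamma> \<in> GL2H"
    unfolding \<gamma>_def using a by (intro GL2H_mult M(1) N(1) GL2H_scalar)
  moreover have "mobius \<gamma> z1 = z1'" "mobius \<gamma> z2 = z2'" "mobius \<gamma> z3 = z3'" "mobius \<gamma> w = w'"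
    unfolding \<gamma>_eq N(2-5) using a M(2-5) by (simp_all add: mobius_scalar)
  moreover have "z = mobius \<gamma> u"
    unfolding z \<gamma>_eq N(6) using a by (simp add: mobius_scalar)
  ultimately show "z \<in> ?C"
    by blast
qed

text \<open>Writing \<open>a = b a\<^sub>0\<close>, the condition \<open>a P a\<inverse> = P' = b P b\<inverse>\<close> says that \<open>a\<^sub>0\<close> commutes with \<open>P\<close>.\<close>

lemma conj_solutions_eq_centralizer_orbit:
  assumes b: "b \<noteq> 0" "b * P = P' * b"
  shows "(\<lambda>a. a * W * inverse a) ` {a. a \<noteq> 0 \<and> a * P * inverse a = P'} =
    (\<lambda>x. b * x * inverse b) ` centralizer_orbit P W"
proof -
  have P': "P' = b * P * inverse b"
    using b by (simp add: mult.assoc)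
  have solution_iff: "(b * a0) * P * inverse (b * a0) = P' \<longleftrightarrow> a0 * P = P * a0" if "a0 \<noteq> 0" for a0
    unfolding conj_mult[OF that b(1)] P' conj_cancel[OF b(1)] conj_eq_iff_commute[OF that] ..
  show ?thesis
  proof (intro set_eqI iffI)
    fix x assume "x \<in> (\<lambda>a. a * W * inverse a) ` {a. a \<noteq> 0 \<and> a * P * inverse a = P'}"
    then obtain a where x: "x = a * W * inverse a" and a: "a \<noteq> 0" "a * P * inverse a = P'"
      by blast
    define a0 where "a0 = inverse b * a"
    have a0: "a0 \<noteq> 0" "b * a0 = a"
      unfolding a0_def using a(1) b(1) by (simp_all add: quat_mult_inverse_cancel_left)
    then have "x = b * (a0 * W * inverse a0) * inverse b" "a0 * P = P * a0"
      using x a(2) solution_iff[OF a0(1)] conj_mult[OF a0(1) b(1)] by simp_all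
    with a0(1) show "x \<in> (\<lambda>x. b * x * inverse b) ` centralizer_orbit P W"
      unfolding centralizer_orbit_def by blast
  next
    fix x assume "x \<in> (\<lambda>x. b * x * inverse b) ` centralizer_orbit P W"
    then obtain a0 where x: "x = b * (a0 * W * inverse a0) * inverse b" and a0: "a0 \<noteq> 0" "a0 * P = P * a0"
      unfolding centralizer_orbit_def by blast
    then have "x = (b * a0) * W * inverse (b * a0)" "(b * a0) * P * inverse (b * a0) = P'" "b * a0 \<noteq> 0"
      using solution_iff[OF a0(1)] conj_mult[OF a0(1) b(1)] b(1) by simp_all
    then show "x \<in> (\<lambda>a. a * W * inverse a) ` {a. a \<noteq> 0 \<and> a * P * inverse a = P'}"
      by blast
  qed
qed

lemma solution_set_four_points:
  assumes z: "distinct [z1, z2, z3, w]" "u \<notin> {z1, z2, z3}" and z': "distinct [z1', z2', z3', w']"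
    and b: "b \<noteq> 0" "b * crossratio z1 z2 z3 w = crossratio z1' z2' z3' w' * b"
  obtains \<Phi> where "\<Phi> \<in> GL2H"
    "{mobius \<gamma> u | \<gamma>. \<gamma> \<in> GL2H \<and> mobius \<gamma> z1 = z1' \<and> mobius \<gamma> z2 = z2' \<and> mobius \<gamma> z3 = z3' \<and> mobius \<gamma> w = w'} =
     (\<lambda>x. mobius \<Phi> (Fin x)) ` centralizer_orbit (crossratio z1 z2 z3 w) (crossratio z1 z2 z3 u)"
proof -
  let ?P = "crossratio z1 z2 z3 w" and ?W = "crossratio z1 z2 z3 u" and ?P' = "crossratio z1' z2' z3' w'"
  obtain N where N: "normalizes N z1 z2 z3"
    using normalizes_exists z(1) by fastforce
  then have N_facts: "N \<in> GL2H" "mobius N z1 = Fin 0" "mobius N z2 = Fin 1" "mobius N z3 = Infty"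
    "mobius N w = Fin (crossratio z1 z2 z3 w)" "mobius N u = Fin (crossratio z1 z2 z3 u)"
    using z unfolding normalizes_def by auto
  obtain N' where N': "normalizes N' z1' z2' z3'"
    using normalizes_exists z'(1) by fastforce
  then obtain M where M: "M \<in> GL2H" "\<And>z. mobius M (mobius N' z) = z"
    unfolding normalizes_def using mobius_inverse by metis
  have "mobius M (Fin 0) = z1'" "mobius M (Fin 1) = z2'" "mobius M Infty = z3'"
    "mobius M (Fin (crossratio z1' z2' z3' w')) = w'"
    using M(2)[of z1'] M(2)[of z2'] M(2)[of z3'] M(2)[of w'] N' z'(1) unfolding normalizes_def by auto
  note conj_image = solution_set_eq_conj_image[OF N_facts M(1) this]
  define \<Phi> where "\<Phi> = qmat_mult M (b, 0, 0, b)"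
  have "\<Phi> \<in> GL2H"
    unfolding \<Phi>_def using M(1) b(1) by (intro GL2H_mult GL2H_scalar)
  have \<Phi>: "mobius \<Phi> (Fin x) = mobius M (Fin (b * x * inverse b))" for x
    unfolding \<Phi>_def using b(1) by (simp add: mobius_qmat_mult GL2H_scalar mobius_scalar)
  have "(\<lambda>a. mobius M (Fin (a * ?W * inverse a))) ` {a. a \<noteq> 0 \<and> a * ?P * inverse a = ?P'} =
      (\<lambda>x. mobius M (Fin x)) ` ((\<lambda>a. a * ?W * inverse a) ` {a. a \<noteq> 0 \<and> a * ?P * inverse a = ?P'})"
    by (simp add: image_image)
  also have "\<dots> = (\<lambda>x. mobius \<Phi> (Fin x)) ` centralizer_orbit ?P ?W"
    unfolding conj_solutions_eq_centralizer_orbit[OF b] image_image \<Phi> ..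
  finally show ?thesis
    using that \<open>\<Phi> \<in> GL2H\<close> conj_image by simp
qed

lemma RH_eq_Re_norm:
  assumes "RH z1 z2 z3 z4 = RH z1' z2' z3' z4'"
  shows "qRe (crossratio z1 z2 z3 z4) = qRe (crossratio z1' z2' z3' z4')"
    "qnormsq (crossratio z1 z2 z3 z4) = qnormsq (crossratio z1' z2' z3' z4')"
  using assms qnormsq_nonneg unfolding RH_def qabs_def Let_def by (simp_all add: real_sqrt_eq_iff)

lemma mobius_image_centralizer_orbit:
  fixes P W :: quat
  assumes \<Phi>: "\<Phi> \<in> GL2H" and Im: "qIm P \<noteq> 0"
  defines "S \<equiv> (\<lambda>x. mobius \<Phi> (Fin x)) ` centralizer_orbit P W"
  shows "(is_circle S \<or> is_line S \<or> (\<exists>p. S = {p})) \<and> ((\<exists>p. S = {p}) \<longleftrightarrow> P * W = W * P)"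
proof (cases "P * W = W * P")
  case True
  then show ?thesis
    unfolding S_def centralizer_orbit_commuting[OF Im True] by simp
next
  case False
  obtain A I where A: "A \<in> GL2H" and I: "unit_imaginary I"
    and orbit: "Fin ` centralizer_orbit P W = mobius A ` std_circle I"
    using centralizer_orbit_circle[OF Im False] .
  have "S = mobius \<Phi> ` (Fin ` centralizer_orbit P W)"
    by (simp add: S_def image_image)
  also have "\<dots> = mobius (qmat_mult \<Phi> A) ` std_circle I"
    by (simp add: orbit image_image mobius_qmat_mult[OF A])
  finally have "S = mobius (qmat_mult \<Phi> A) ` std_circle I" .
  moreover have "\<nexists>p. S = {p}"
  proof
    assume "\<exists>p. S = {p}"
    then obtain p where S: "S = {p}"
      by blast
    then obtain x where x: "x \<in> centralizer_orbit P W" "p = mobius \<Phi> (Fin x)"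
      unfolding S_def by blast
    have "y = x" if "y \<in> centralizer_orbit P W" for y
    proof -
      have "mobius \<Phi> (Fin y) = mobius \<Phi> (Fin x)"
        using that S x(2) unfolding S_def by blast
      then show ?thesis
        using mobius_inj[OF \<Phi>] by blast
    qed
    with x(1) have "centralizer_orbit P W = {x}"
      by blast
    with centralizer_orbit_not_singleton[OF False] show False
      by blast
  qed
  ultimately show ?thesis
    using mobius_image_std_circle[OF GL2H_mult[OF \<Phi> A] I] False by blast
qed

theorem mainTheorem6:
  fixes q :: "nat \<Rightarrow> hquat" and q' :: "nat \<Rightarrow> hquat"
  assumes "inj_on q {1..5}"
    and "inj_on q' {1..4}"
    and "RH (q 1) (q 2) (q 3) (q 4) = RH (q' 1) (q' 2) (q' 3) (q' 4)"
    and "qIm (crossratio (q 1) (q 2) (q 3) (q 4)) \<noteq> 0"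
  defines "C \<equiv> {mobius \<gamma> (q 5) | \<gamma>. \<gamma> \<in> GL2H \<and> (\<forall>n\<in>{1..4}. mobius \<gamma> (q n) = q' n)}"
  shows "(is_circle C \<or> is_line C \<or> (\<exists>p. C = {p})) \<and>
         ((\<exists>p. C = {p}) \<longleftrightarrow>
            crossratio (q 1) (q 2) (q 3) (q 4) * crossratio (q 1) (q 2) (q 3) (q 5) =
            crossratio (q 1) (q 2) (q 3) (q 5) * crossratio (q 1) (q 2) (q 3) (q 4))"
proof -
  let ?P = "crossratio (q 1) (q 2) (q 3) (q 4)" and ?W = "crossratio (q 1) (q 2) (q 3) (q 5)"
  have "q i \<noteq> q j" if "i \<in> {1..5}" "j \<in> {1..5}" "i \<noteq> j" for i j
    using assms(1) that by (auto dest: inj_onD)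
  moreover have "q' i \<noteq> q' j" if "i \<in> {1..4}" "j \<in> {1..4}" "i \<noteq> j" for i j
    using assms(2) that by (auto dest: inj_onD)
  ultimately have distinct: "distinct [q 1, q 2, q 3, q 4]" "q 5 \<notin> {q 1, q 2, q 3}" "distinct [q' 1, q' 2, q' 3, q' 4]"
    by simp_all
  obtain b where b: "b \<noteq> 0" "b * ?P = crossratio (q' 1) (q' 2) (q' 3) (q' 4) * b"
    using quat_conjugate_of_same_Re_norm[OF RH_eq_Re_norm[OF assms(3)]] by blast
  obtain \<Phi> where \<Phi>: "\<Phi> \<in> GL2H" and orbit: "{mobius \<gamma> (q 5) | \<gamma>. \<gamma> \<in> GL2H \<and> mobius \<gamma> (q 1) = q' 1 \<and>
      mobius \<gamma> (q 2) = q' 2 \<and> mobius \<gamma> (q 3) = q' 3 \<and> mobius \<gamma> (q 4) = q' 4} =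
      (\<lambda>x. mobius \<Phi> (Fin x)) ` centralizer_orbit ?P ?W"
    using solution_set_four_points[OF distinct b] .
  have "{1..4::nat} = {1, 2, 3, 4}"
    by auto
  then have C: "C = (\<lambda>x. mobius \<Phi> (Fin x)) ` centralizer_orbit ?P ?W"
    unfolding orbit[symmetric] by (simp add: C_def conj_assoc)
  show ?thesis
    unfolding C by (rule mobius_image_centralizer_orbit[OF \<Phi> assms(4)])
qed

end
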